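(* Let $(Y_i,X_i,Z_i)$, $i=1,\dots,n$, be i.i.d. copies of $(Y,X,Z)$ and suppose the null hypothesis $H_0: X\perp Y\mid Z$ holds. Let $M\ge 1$ be an integer, and suppose that, conditional on $(\mathbf x,\mathbf y,\mathbf Z)$, the vectors $\mathbf x^{(1)},\dots,\mathbf x^{(M)}\in\mathbb R^n$ are drawn i.i.d. from a distribution $Q(\cdot\mid \mathbf Z)$ that depends on the data only through $\mathbf Z$. Suppose that either (i) $Q(\cdot\mid\mathbf Z)$ equals the conditional distribution of $\mathbf x$ given $\mathbf Z$ (so each $\mathbf x^{(m)}$ is exchangeable with $\mathbf x$ given $\mathbf Z$); or (ii) $Q(\cdot\mid\mathbf Z)$ depends on $\mathbf Z$ only through $(g(\mathbf Z),h(\mathbf Z))$ and equals the conditional distribution of $\mathbf x$ given $(g(\mathbf Z),h(\mathbf Z))$ (so each $\mathbf x^{(m)}$ is exchangeable with $\mathbf x$ given $(g(\mathbf Z),h(\mathbf Z))$), and $\mathbf Z\perp \mathbf y\mid g(\mathbf Z)$. Then the Maxway CRT $p$-value $$p_{\mathrm{maxway}}(\mathbf D)=\frac{1}{M+1}\Big(1+\sum_{m=1}^M \mathbf 1\big\{T(\mathbf y,\mathbf x^{(m)},g(\mathbf Z),h(\mathbf Z))\ge T(\mathbf y,\mathbf x,g(\mathbf Z),h(\mathbf Z))\big\}\Big)$$ satisfies $\mathbb P(p_{\mathrm{maxway}}(\mathbf D)\le\alpha)\le\alpha$ for every $\alpha\in[0,1]$.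
   Context: $(Y,X,Z)$ is a random triple with $Y\in\mathbb R$, $X\in\mathbb R$, $Z\in\mathbb R^p$. Write $\mathbf y=(Y_1,\dots,Y_n)^\top$, $\mathbf x=(X_1,\dots,X_n)^\top$, $\mathbf Z$ the $n\times p$ matrix with rows $Z_i^\top$, and $\mathbf D=(\mathbf y,\mathbf x,\mathbf Z)$. $g$ and $h$ are fixed (non-random) measurable functions of $Z$ taking values in finite-dimensional Euclidean spaces; $g(\mathbf Z)=(g(Z_1),\dots,g(Z_n))$ and $h(\mathbf Z)=(h(Z_1),\dots,h(Z_n))$. $T(\mathbf y,\mathbf a,g(\mathbf Z),h(\mathbf Z))$ is a fixed measurable real-valued test statistic. *)

theory Defs
  imports "HOL-Probability.Probability"
begin

definition gen_sigma :: "'a measure \<Rightarrow> ('a \<Rightarrow> 'c) \<Rightarrow> 'c measure \<Rightarrow> 'a measure" where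
  "gen_sigma P Z MZ = vimage_algebra (space P) Z MZ"

definition cond_prob :: "'a measure \<Rightarrow> ('a \<Rightarrow> 'c) \<Rightarrow> 'c measure \<Rightarrow> ('a \<Rightarrow> bool) \<Rightarrow> 'a \<Rightarrow> real" where
  "cond_prob P Z MZ E = real_cond_exp P (gen_sigma P Z MZ) (\<lambda>\<omega>. of_bool (E \<omega>))"

definition cond_indep ::
  "'a measure \<Rightarrow> ('a \<Rightarrow> 'b) \<Rightarrow> 'b measure \<Rightarrow> ('a \<Rightarrow> 'd) \<Rightarrow> 'd measure
     \<Rightarrow> ('a \<Rightarrow> 'c) \<Rightarrow> 'c measure \<Rightarrow> bool" where
  "cond_indep P X MX Y MY Z MZ \<longleftrightarrow>
     (\<forall>A\<in>sets MX. \<forall>B\<in>sets MY. AE \<omega> in P.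
        cond_prob P Z MZ (\<lambda>\<omega>. X \<omega> \<in> A \<and> Y \<omega> \<in> B) \<omega>
        = cond_prob P Z MZ (\<lambda>\<omega>. X \<omega> \<in> A) \<omega> * cond_prob P Z MZ (\<lambda>\<omega>. Y \<omega> \<in> B) \<omega>)"

text \<open>Length-n vectors are represented as extensional functions on {..<n}.\<close>
definition vecM :: "nat \<Rightarrow> 'b measure \<Rightarrow> (nat \<Rightarrow> 'b) measure" where
  "vecM n MB = PiM {..<n} (\<lambda>_. MB)"

definition rvec :: "nat \<Rightarrow> (nat \<Rightarrow> 'a \<Rightarrow> 'b) \<Rightarrow> 'a \<Rightarrow> nat \<Rightarrow> 'b" where
  "rvec n F \<omega> = (\<lambda>i\<in>{..<n}. F i \<omega>)"

definition vmap :: "nat \<Rightarrow> ('b \<Rightarrow> 'c) \<Rightarrow> (nat \<Rightarrow> 'b) \<Rightarrow> nat \<Rightarrow> 'c" where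
  "vmap n g v = (\<lambda>i\<in>{..<n}. g (v i))"

definition p_maxway ::
  "nat \<Rightarrow> ((nat \<Rightarrow> real) \<Rightarrow> (nat \<Rightarrow> real) \<Rightarrow> (nat \<Rightarrow> 'g) \<Rightarrow> (nat \<Rightarrow> 'h) \<Rightarrow> real)
    \<Rightarrow> (nat \<Rightarrow> real) \<Rightarrow> (nat \<Rightarrow> real) \<Rightarrow> (nat \<Rightarrow> nat \<Rightarrow> real) \<Rightarrow> (nat \<Rightarrow> 'g) \<Rightarrow> (nat \<Rightarrow> 'h) \<Rightarrow> real" where
  "p_maxway Mc T y x xt gZ hZ =
     (1 + (\<Sum>m\<in>{1..Mc}. of_bool (T y (xt m) gZ hZ \<ge> T y x gZ hZ))) / (real Mc + 1)"

end

theory Submission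
  imports Defs "HOL-Combinatorics.Transposition"
begin

text \<open>
  Under the null hypothesis every row satisfies \<open>X\<^sub>i \<perp> Y\<^sub>i | Z\<^sub>i\<close>, and independence of the rows lifts
  this to \<open>x \<perp> y | Z\<close> for the whole vectors, i.e. the conditional law of \<open>x\<close> given \<open>(y, Z)\<close> is its
  conditional law given \<open>Z\<close>.  In case (ii) the assumption \<open>Z \<perp> y | g(Z)\<close> further shows that the
  conditional law of \<open>x\<close> given \<open>(y, g(Z), h(Z))\<close> is its conditional law given \<open>(g(Z), h(Z))\<close>.  Either way
  the resampling law \<open>Q\<close> is the conditional law of \<open>x\<close> given a \<sigma>-algebra with respect to which
  \<open>W = (y, g(Z), h(Z))\<close> is measurable.  Since \<open>x(1), \<dots>, x(M)\<close> are conditionally i.i.d. from \<open>Q\<close>, the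
  joint law of \<open>(W, x, x(1), \<dots>, x(M))\<close> is a mixture of product laws and hence invariant under
  permutations of the last \<open>M + 1\<close> coordinates.  So the rank of \<open>T(y, x, \<dots>)\<close> among the \<open>M + 1\<close> values
  of the statistic is stochastically at least uniform, which is the validity of the p-value.
\<close>

section \<open>Generated \<sigma>-algebras\<close>

lemma subalgebra_vimage_algebra:
  assumes "V \<in> M \<rightarrow>\<^sub>M N"
  shows "subalgebra M (vimage_algebra (space M) V N)"
  unfolding subalgebra_def using assms by (auto simp: sets_vimage_algebra2 measurable_def)

lemma (in finite_measure) sigma_finite_subalgebra_vimage_algebra:
  assumes "V \<in> M \<rightarrow>\<^sub>M N"
  shows "sigma_finite_subalgebra M (vimage_algebra (space M) V N)"
proof -
  interpret finite_measure_subalgebra M "vimage_algebra (space M) V N"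
    using subalgebra_vimage_algebra[OF assms] by unfold_locales
  show ?thesis by unfold_locales
qed

lemma measurable_vimage_algebra_comp:
  assumes "V \<in> M \<rightarrow>\<^sub>M N" "u \<in> N \<rightarrow>\<^sub>M K"
  shows "(\<lambda>\<omega>. u (V \<omega>)) \<in> vimage_algebra (space M) V N \<rightarrow>\<^sub>M K"
  using measurable_comp[OF measurable_vimage_algebra1 assms(2), of V "space M"] assms(1)
  by (auto simp: measurable_def o_def)

lemma measurable_vimage_algebra_factor:
  assumes V: "V \<in> M \<rightarrow>\<^sub>M N" and W: "W \<in> M \<rightarrow>\<^sub>M K" and u: "u \<in> N \<rightarrow>\<^sub>M K"
    and W_eq: "\<And>\<omega>. \<omega> \<in> space M \<Longrightarrow> W \<omega> = u (V \<omega>)"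
    and f: "f \<in> vimage_algebra (space M) W K \<rightarrow>\<^sub>M L"
  shows "f \<in> vimage_algebra (space M) V N \<rightarrow>\<^sub>M L"
proof (rule measurable_from_subalg[OF _ f])
  have "W -` A \<inter> space M \<in> sets (vimage_algebra (space M) V N)" if "A \<in> sets K" for A
  proof -
    have "W -` A \<inter> space M = V -` (u -` A \<inter> space N) \<inter> space M"
      using W_eq V by (auto simp: measurable_def)
    moreover have "u -` A \<inter> space N \<in> sets N"
      using u that by (rule measurable_sets)
    ultimately show ?thesis
      by (metis in_vimage_algebra)
  qed
  then show "subalgebra (vimage_algebra (space M) V N) (vimage_algebra (space M) W K)"
    unfolding subalgebra_def using W
    by (auto simp: sets_vimage_algebra2 measurable_def)
qed

definition Int_stable_generator :: "'b measure \<Rightarrow> 'b set set \<Rightarrow> bool" where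
  "Int_stable_generator N E \<longleftrightarrow>
     sets N = sigma_sets (space N) E \<and> Int_stable E \<and> E \<subseteq> Pow (space N) \<and> space N \<in> E"

lemma Int_stable_generator_sets: "Int_stable_generator N (sets N)"
  using sets.sets_into_space
  by (auto simp: Int_stable_generator_def sets.sigma_sets_eq Int_stable_def)


lemma Int_stable_generator_PiM:
  assumes "finite I"
  shows "Int_stable_generator (PiM I (\<lambda>_. N)) {PiE I A | A. \<forall>i\<in>I. A i \<in> sets N}"
proof -
  have "{PiE I X | X. (\<forall>i. X i \<in> sets N) \<and> finite {i. X i \<noteq> space N}}
      = {PiE I A | A. \<forall>i\<in>I. A i \<in> sets N}"
  proof (intro equalityI subsetI)
    fix S assume "S \<in> {PiE I A | A. \<forall>i\<in>I. A i \<in> sets N}"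
    then obtain A where A: "S = PiE I A" "\<forall>i\<in>I. A i \<in> sets N" by blast
    define X where "X i = (if i \<in> I then A i else space N)" for i
    have "S = PiE I X" unfolding A X_def by (intro PiE_cong) auto
    moreover have "\<forall>i. X i \<in> sets N" using A(2) by (auto simp: X_def)
    moreover have "finite {i. X i \<noteq> space N}"
      by (rule finite_subset[OF _ assms]) (auto simp: X_def)
    ultimately show "S \<in> {PiE I X | X. (\<forall>i. X i \<in> sets N) \<and> finite {i. X i \<noteq> space N}}"
      by blast
  qed blast
  moreover have "{PiE I A | A. \<forall>i\<in>I. A i \<in> sets N} \<subseteq> Pow (space (PiM I (\<lambda>_. N)))"
    using sets.sets_into_space by (fastforce simp: space_PiM PiE_iff)
  ultimately show ?thesis
    using sets_PiM_finite[of I "\<lambda>_. N"] Int_stable_PiE[of I I "\<lambda>_. N"]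
    unfolding Int_stable_generator_def
    by (auto simp: space_PiM intro!: exI[of _ "\<lambda>_. space N"])
qed

lemma Int_stable_generator_pair:
  assumes E1: "Int_stable_generator N1 E1" and E2: "Int_stable_generator N2 E2"
  shows "Int_stable_generator (N1 \<Otimes>\<^sub>M N2) {a \<times> b | a b. a \<in> E1 \<and> b \<in> E2}"
proof -
  note E1 = E1[unfolded Int_stable_generator_def] and E2 = E2[unfolded Int_stable_generator_def]
  have "sets (N1 \<Otimes>\<^sub>M N2) = sets (sigma (space N1) E1 \<Otimes>\<^sub>M sigma (space N2) E2)"
    using E1 E2 by (intro sets_pair_measure_cong) auto
  also have "\<dots> = sets (sigma (space N1 \<times> space N2) {a \<times> b | a b. a \<in> E1 \<and> b \<in> E2})"
    using E1 E2 by (subst sigma_prod) (auto intro!: exI[of _ "{space N1}"] exI[of _ "{space N2}"])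
  also have "\<dots> = sigma_sets (space (N1 \<Otimes>\<^sub>M N2)) {a \<times> b | a b. a \<in> E1 \<and> b \<in> E2}"
    using E1 E2 by (subst sets_measure_of) (auto simp: space_pair_measure)
  finally have "sets (N1 \<Otimes>\<^sub>M N2) = sigma_sets (space (N1 \<Otimes>\<^sub>M N2)) {a \<times> b | a b. a \<in> E1 \<and> b \<in> E2}" .
  moreover have "Int_stable {a \<times> b | a b. a \<in> E1 \<and> b \<in> E2}"
  proof (rule Int_stableI)
    fix S S' assume "S \<in> {a \<times> b | a b. a \<in> E1 \<and> b \<in> E2}" "S' \<in> {a \<times> b | a b. a \<in> E1 \<and> b \<in> E2}"
    then obtain a b a' b' where "S = a \<times> b" "S' = a' \<times> b'" "a \<in> E1" "a' \<in> E1" "b \<in> E2" "b' \<in> E2"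
      by blast
    moreover have "a \<inter> a' \<in> E1" "b \<inter> b' \<in> E2"
      using E1 E2 \<open>a \<in> E1\<close> \<open>a' \<in> E1\<close> \<open>b \<in> E2\<close> \<open>b' \<in> E2\<close> by (auto simp: Int_stable_def)
    ultimately show "S \<inter> S' \<in> {a \<times> b | a b. a \<in> E1 \<and> b \<in> E2}"
      by (auto simp: Times_Int_Times)
  qed
  ultimately show ?thesis
    using E1 E2 unfolding Int_stable_generator_def by (auto simp: space_pair_measure)
qed

lemma Int_stable_generator_pair_measure:
  "Int_stable_generator (N1 \<Otimes>\<^sub>M N2) {a \<times> b | a b. a \<in> sets N1 \<and> b \<in> sets N2}"
  using Int_stable_generator_pair[OF Int_stable_generator_sets Int_stable_generator_sets] .

lemma indicator_PiE_restrict: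
  assumes "finite I"
  shows "indicator (PiE I A) (\<lambda>i\<in>I. F i) = (\<Prod>i\<in>I. indicator (A i) (F i) :: real)"
proof (cases "\<forall>i\<in>I. F i \<in> A i")
  case True
  then show ?thesis by (simp add: indicator_def PiE_iff)
next
  case False
  then obtain j where "j \<in> I" "F j \<notin> A j" by blast
  then show ?thesis
    using assms by (auto simp: indicator_def PiE_iff intro!: prod_zero bexI[of _ j])
qed

lemma indicator_PiE_rvec:
  "indicator (PiE {..<n} S) (rvec n F \<omega>) = (\<Prod>i<n. indicator (S i) (F i \<omega>) :: real)"
  unfolding rvec_def by (rule indicator_PiE_restrict) simp

section \<open>Integrals against indicators of random elements\<close>

lemma emeasure_distr_density_eq_integral:
  fixes f :: "'a \<Rightarrow> real"
  assumes V: "V \<in> M \<rightarrow>\<^sub>M N" and f: "integrable M f" "AE \<omega> in M. 0 \<le> f \<omega>"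
    and S: "S \<in> sets N"
  shows "emeasure (distr (density M (\<lambda>\<omega>. ennreal (f \<omega>))) N V) S
       = ennreal (\<integral>\<omega>. indicator S (V \<omega>) * f \<omega> \<partial>M)"
proof -
  have f_meas: "(\<lambda>\<omega>. ennreal (f \<omega>)) \<in> borel_measurable M"
    using borel_measurable_integrable[OF f(1)] by measurable
  have V': "V \<in> density M (\<lambda>\<omega>. ennreal (f \<omega>)) \<rightarrow>\<^sub>M N"
    using V by (simp cong: measurable_cong_sets)
  have pre: "V -` S \<inter> space M \<in> sets M" using V S by (rule measurable_sets)
  have int: "integrable M (\<lambda>\<omega>. indicator (V -` S \<inter> space M) \<omega> * f \<omega>)"
    using integrable_real_mult_indicator[OF pre f(1)] by (simp add: mult.commute)
  have "emeasure (distr (density M (\<lambda>\<omega>. ennreal (f \<omega>))) N V) S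
      = (\<integral>\<^sup>+ \<omega>. ennreal (f \<omega>) * indicator (V -` S \<inter> space M) \<omega> \<partial>M)"
    using emeasure_distr[OF V' S] emeasure_density[OF f_meas pre] by simp
  also have "\<dots> = (\<integral>\<^sup>+ \<omega>. ennreal (indicator (V -` S \<inter> space M) \<omega> * f \<omega>) \<partial>M)"
    by (intro nn_integral_cong) (simp add: indicator_def)
  also have "\<dots> = ennreal (\<integral>\<omega>. indicator (V -` S \<inter> space M) \<omega> * f \<omega> \<partial>M)"
    using f(2) by (intro nn_integral_eq_integral[OF int]) (auto elim!: eventually_mono)
  also have "(\<integral>\<omega>. indicator (V -` S \<inter> space M) \<omega> * f \<omega> \<partial>M) = (\<integral>\<omega>. indicator S (V \<omega>) * f \<omega> \<partial>M)"
    by (intro Bochner_Integration.integral_cong) (auto simp: indicator_def)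
  finally show ?thesis .
qed

text \<open>
  The two sides are the measures \<open>S \<mapsto> \<integral> 1\<^sub>S(V\<^sub>1) f\<close> and \<open>S \<mapsto> \<integral> 1\<^sub>S(V\<^sub>2) g\<close>, so they agree everywhere
  once they agree on an \<open>\<inter>\<close>-stable generator.
\<close>
lemma integral_indicator_eq_on_generator:
  fixes f g :: "'a \<Rightarrow> real"
  assumes V1: "V1 \<in> M \<rightarrow>\<^sub>M N" and V2: "V2 \<in> M \<rightarrow>\<^sub>M N" and E: "Int_stable_generator N E"
    and f: "integrable M f" "AE \<omega> in M. 0 \<le> f \<omega>"
    and g: "integrable M g" "AE \<omega> in M. 0 \<le> g \<omega>"
    and eq: "\<And>S. S \<in> E \<Longrightarrow> (\<integral>\<omega>. indicator S (V1 \<omega>) * f \<omega> \<partial>M) = (\<integral>\<omega>. indicator S (V2 \<omega>) * g \<omega> \<partial>M)"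
    and S: "S \<in> sets N"
  shows "(\<integral>\<omega>. indicator S (V1 \<omega>) * f \<omega> \<partial>M) = (\<integral>\<omega>. indicator S (V2 \<omega>) * g \<omega> \<partial>M)"
proof -
  note E = E[unfolded Int_stable_generator_def]
  let ?mf = "distr (density M (\<lambda>\<omega>. ennreal (f \<omega>))) N V1"
  let ?mg = "distr (density M (\<lambda>\<omega>. ennreal (g \<omega>))) N V2"
  have "?mf = ?mg"
  proof (rule measure_eqI_generator_eq[of E "space N" _ _ "\<lambda>_. space N"])
    fix X assume "X \<in> E"
    then show "emeasure ?mf X = emeasure ?mg X"
      using E emeasure_distr_density_eq_integral[OF V1 f] emeasure_distr_density_eq_integral[OF V2 g]
        eq[of X] by auto
  next
    show "emeasure ?mf (space N) \<noteq> \<infinity>"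
      using emeasure_distr_density_eq_integral[OF V1 f, of "space N"] by simp
  qed (use E in auto)
  then have "ennreal (\<integral>\<omega>. indicator S (V1 \<omega>) * f \<omega> \<partial>M) = ennreal (\<integral>\<omega>. indicator S (V2 \<omega>) * g \<omega> \<partial>M)"
    using emeasure_distr_density_eq_integral[OF V1 f S] emeasure_distr_density_eq_integral[OF V2 g S]
    by simp
  moreover have "0 \<le> (\<integral>\<omega>. indicator S (V1 \<omega>) * f \<omega> \<partial>M)"
    using f(2) by (auto intro!: integral_nonneg_AE elim!: eventually_mono)
  moreover have "0 \<le> (\<integral>\<omega>. indicator S (V2 \<omega>) * g \<omega> \<partial>M)"
    using g(2) by (auto intro!: integral_nonneg_AE elim!: eventually_mono)
  ultimately show ?thesis by simp
qed

lemma integrable_mult_abs_le_1: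
  fixes k f :: "'a \<Rightarrow> real"
  assumes f: "integrable M f" and k: "k \<in> borel_measurable M" and k_bound: "AE \<omega> in M. \<bar>k \<omega>\<bar> \<le> 1"
  shows "integrable M (\<lambda>\<omega>. k \<omega> * f \<omega>)" "integrable M (\<lambda>\<omega>. f \<omega> * k \<omega>)"
proof -
  have "AE \<omega> in M. norm (k \<omega> * f \<omega>) \<le> norm (f \<omega>)"
    using k_bound by eventually_elim (simp add: abs_mult mult_left_le_one_le)
  then show "integrable M (\<lambda>\<omega>. k \<omega> * f \<omega>)"
    using Bochner_Integration.integrable_bound[OF f] borel_measurable_integrable[OF f] k
    by (metis borel_measurable_times real_norm_def)
  then show "integrable M (\<lambda>\<omega>. f \<omega> * k \<omega>)" by (simp add: mult.commute)
qed

lemma (in finite_measure) integrable_abs_le_1: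
  fixes f :: "'a \<Rightarrow> real"
  assumes "f \<in> borel_measurable M" "AE \<omega> in M. \<bar>f \<omega>\<bar> \<le> 1"
  shows "integrable M f"
  by (rule integrable_const_bound[where B=1]) (use assms in auto)

lemma AE_abs_mult_le_1:
  fixes a b :: "'a \<Rightarrow> real"
  assumes "AE \<omega> in M. \<bar>a \<omega>\<bar> \<le> 1" "AE \<omega> in M. \<bar>b \<omega>\<bar> \<le> 1"
  shows "AE \<omega> in M. \<bar>a \<omega> * b \<omega>\<bar> \<le> 1"
  using assms by eventually_elim (auto simp: abs_mult intro: mult_le_one)

section \<open>Conditional expectations of indicators\<close>

context prob_space
begin

lemma real_cond_exp_unit_interval:
  fixes f :: "'a \<Rightarrow> real"
  assumes F: "sigma_finite_subalgebra M F" and f: "f \<in> borel_measurable M"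
    "\<And>\<omega>. \<omega> \<in> space M \<Longrightarrow> 0 \<le> f \<omega> \<and> f \<omega> \<le> 1"
  shows "AE \<omega> in M. 0 \<le> real_cond_exp M F f \<omega> \<and> real_cond_exp M F f \<omega> \<le> 1"
    and "AE \<omega> in M. \<bar>real_cond_exp M F f \<omega>\<bar> \<le> 1"
    and "integrable M (real_cond_exp M F f)"
proof -
  have int: "integrable M f" using f by (intro integrable_abs_le_1 AE_I2) auto
  have "AE \<omega> in M. 0 \<le> real_cond_exp M F f \<omega>" "AE \<omega> in M. real_cond_exp M F f \<omega> \<le> 1"
    using sigma_finite_subalgebra.real_cond_exp_ge_c[OF F int, of 0]
      sigma_finite_subalgebra.real_cond_exp_le_c[OF F int, of 1] f(2) by auto
  then show "AE \<omega> in M. 0 \<le> real_cond_exp M F f \<omega> \<and> real_cond_exp M F f \<omega> \<le> 1"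
    by eventually_elim auto
  then show "AE \<omega> in M. \<bar>real_cond_exp M F f \<omega>\<bar> \<le> 1" by eventually_elim auto
  show "integrable M (real_cond_exp M F f)"
    using sigma_finite_subalgebra.real_cond_exp_int(1)[OF F int] .
qed

lemma integral_mult_real_cond_exp:
  fixes k e :: "'a \<Rightarrow> real"
  assumes F: "sigma_finite_subalgebra M F"
    and k: "k \<in> borel_measurable F" "AE \<omega> in M. \<bar>k \<omega>\<bar> \<le> 1"
    and e: "e \<in> borel_measurable M" "\<And>\<omega>. \<omega> \<in> space M \<Longrightarrow> 0 \<le> e \<omega> \<and> e \<omega> \<le> 1"
  shows "(\<integral>\<omega>. k \<omega> * real_cond_exp M F e \<omega> \<partial>M) = (\<integral>\<omega>. k \<omega> * e \<omega> \<partial>M)"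
proof (rule sigma_finite_subalgebra.real_cond_exp_intg(2)[OF F _ k(1) e(1)])
  have "integrable M e" using e by (intro integrable_abs_le_1 AE_I2) auto
  then show "integrable M (\<lambda>\<omega>. k \<omega> * e \<omega>)"
    using k measurable_from_subalg[OF sigma_finite_subalgebra.subalg[OF F]]
    by (intro integrable_mult_abs_le_1(1)) auto
qed

lemma real_cond_exp_self_adjoint:
  fixes f g :: "'a \<Rightarrow> real"
  assumes F: "sigma_finite_subalgebra M F"
    and f: "f \<in> borel_measurable M" "\<And>\<omega>. \<omega> \<in> space M \<Longrightarrow> 0 \<le> f \<omega> \<and> f \<omega> \<le> 1"
    and g: "g \<in> borel_measurable M" "\<And>\<omega>. \<omega> \<in> space M \<Longrightarrow> 0 \<le> g \<omega> \<and> g \<omega> \<le> 1"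
  shows "(\<integral>\<omega>. real_cond_exp M F f \<omega> * g \<omega> \<partial>M) = (\<integral>\<omega>. f \<omega> * real_cond_exp M F g \<omega> \<partial>M)"
proof -
  have "(\<integral>\<omega>. real_cond_exp M F f \<omega> * g \<omega> \<partial>M)
      = (\<integral>\<omega>. real_cond_exp M F f \<omega> * real_cond_exp M F g \<omega> \<partial>M)"
    using real_cond_exp_unit_interval(2)[OF F f]
    by (intro integral_mult_real_cond_exp[OF F _ _ g, symmetric]) auto
  also have "\<dots> = (\<integral>\<omega>. real_cond_exp M F g \<omega> * f \<omega> \<partial>M)"
    using real_cond_exp_unit_interval(2)[OF F g]
    by (subst mult.commute, intro integral_mult_real_cond_exp[OF F _ _ f]) auto
  finally show ?thesis by (simp add: mult.commute)
qed

lemma real_cond_exp_vimage_algebra_charact: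
  fixes f g :: "'a \<Rightarrow> real"
  assumes V: "V \<in> M \<rightarrow>\<^sub>M N" and E: "Int_stable_generator N E"
    and f: "integrable M f" "AE \<omega> in M. 0 \<le> f \<omega>"
    and g: "integrable M g" "AE \<omega> in M. 0 \<le> g \<omega>" "g \<in> borel_measurable (vimage_algebra (space M) V N)"
    and eq: "\<And>S. S \<in> E \<Longrightarrow> (\<integral>\<omega>. indicator S (V \<omega>) * f \<omega> \<partial>M) = (\<integral>\<omega>. indicator S (V \<omega>) * g \<omega> \<partial>M)"
  shows "AE \<omega> in M. real_cond_exp M (vimage_algebra (space M) V N) f \<omega> = g \<omega>"
proof (rule sigma_finite_subalgebra.real_cond_exp_charact[OF sigma_finite_subalgebra_vimage_algebra[OF V]])
  fix A assume "A \<in> sets (vimage_algebra (space M) V N)"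
  then obtain S where S: "S \<in> sets N" "A = V -` S \<inter> space M"
    using V by (auto simp: sets_vimage_algebra2 measurable_def)
  have *: "(\<integral>\<omega>\<in>A. h \<omega> \<partial>M) = (\<integral>\<omega>. indicator S (V \<omega>) * h \<omega> \<partial>M)" for h :: "'a \<Rightarrow> real"
    unfolding set_lebesgue_integral_def using S(2)
    by (intro Bochner_Integration.integral_cong) (auto simp: indicator_def)
  show "(\<integral>\<omega>\<in>A. f \<omega> \<partial>M) = (\<integral>\<omega>\<in>A. g \<omega> \<partial>M)"
    unfolding * using integral_indicator_eq_on_generator[OF V V E f g(1,2) eq S(1)] .
qed (use f g in auto)

lemma indep_vars_integral_prod_vimage:
  fixes \<phi> :: "'i \<Rightarrow> 'a \<Rightarrow> real"
  assumes I: "finite I" and indep: "indep_vars (\<lambda>_. N) W I"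
    and meas: "\<And>i. i \<in> I \<Longrightarrow> \<phi> i \<in> borel_measurable (vimage_algebra (space M) (W i) N)"
    and int: "\<And>i. i \<in> I \<Longrightarrow> integrable M (\<phi> i)"
  shows "(\<integral>\<omega>. (\<Prod>i\<in>I. \<phi> i \<omega>) \<partial>M) = (\<Prod>i\<in>I. \<integral>\<omega>. \<phi> i \<omega> \<partial>M)"
proof -
  have "indep_vars (\<lambda>_. borel) \<phi> I"
    unfolding indep_vars_def2
  proof
    show "\<forall>i\<in>I. random_variable borel (\<phi> i)" using int by auto
    have "indep_sets (\<lambda>i. sigma_sets (space M) {W i -` A \<inter> space M | A. A \<in> sets N}) I"
      using indep unfolding indep_vars_def by blast
    then show "indep_sets (\<lambda>i. {\<phi> i -` A \<inter> space M |A. A \<in> sets borel}) I"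
    proof (rule indep_sets_mono_sets)
      fix i assume i: "i \<in> I"
      show "{\<phi> i -` A \<inter> space M |A. A \<in> sets borel} \<subseteq> sigma_sets (space M) {W i -` A \<inter> space M | A. A \<in> sets N}"
        using measurable_sets[OF meas[OF i]] by (auto simp: sets_vimage_algebra)
    qed
  qed
  then show ?thesis using indep_vars_lebesgue_integral[OF I _ int] by auto
qed

lemma cond_indep_integral_indicator:
  fixes X Y :: "'a \<Rightarrow> real" and Z :: "'a \<Rightarrow> 'z"
  assumes X: "X \<in> borel_measurable M" and Y: "Y \<in> borel_measurable M" and Z: "Z \<in> M \<rightarrow>\<^sub>M MZ"
    and XY: "cond_indep M X borel Y borel Z MZ"
    and A: "A \<in> sets borel" and B: "B \<in> sets borel" and C: "C \<in> sets MZ"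
  shows "(\<integral>\<omega>. indicator A (X \<omega>) * indicator B (Y \<omega>) * indicator C (Z \<omega>) \<partial>M)
       = (\<integral>\<omega>. cond_prob M Z MZ (\<lambda>\<omega>. X \<omega> \<in> A) \<omega> * indicator B (Y \<omega>) * indicator C (Z \<omega>) \<partial>M)"
proof -
  define F where "F = vimage_algebra (space M) Z MZ"
  have F: "sigma_finite_subalgebra M F"
    unfolding F_def by (rule sigma_finite_subalgebra_vimage_algebra[OF Z])
  define I where "I \<omega> = (indicator C (Z \<omega>) :: real)" for \<omega>
  define eA where "eA \<omega> = (of_bool (X \<omega> \<in> A) :: real)" for \<omega>
  define eB where "eB \<omega> = (of_bool (Y \<omega> \<in> B) :: real)" for \<omega>
  define eAB where "eAB \<omega> = (of_bool (X \<omega> \<in> A \<and> Y \<omega> \<in> B) :: real)" for \<omega>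
  have meas: "eA \<in> borel_measurable M" "eB \<in> borel_measurable M" "eAB \<in> borel_measurable M"
    unfolding eA_def eB_def eAB_def using X Y A B by measurable
  define pA where "pA = real_cond_exp M F eA"
  have I_F: "I \<in> borel_measurable F"
    unfolding I_def F_def by (rule measurable_vimage_algebra_comp[OF Z]) (use C in simp)
  have I_M[measurable]: "I \<in> borel_measurable M"
    using measurable_from_subalg[OF sigma_finite_subalgebra.subalg[OF F] I_F] .
  have IpA_F: "(\<lambda>\<omega>. I \<omega> * pA \<omega>) \<in> borel_measurable F"
    unfolding pA_def using I_F borel_measurable_cond_exp by (rule borel_measurable_times)
  have IpA_bound: "AE \<omega> in M. \<bar>I \<omega> * pA \<omega>\<bar> \<le> 1"
    using real_cond_exp_unit_interval(2)[OF F meas(1)] unfolding pA_def eA_def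
    by (auto simp: I_def indicator_def elim!: eventually_mono)
  have "AE \<omega> in M. cond_prob M Z MZ (\<lambda>\<omega>. X \<omega> \<in> A \<and> Y \<omega> \<in> B) \<omega>
      = cond_prob M Z MZ (\<lambda>\<omega>. X \<omega> \<in> A) \<omega> * cond_prob M Z MZ (\<lambda>\<omega>. Y \<omega> \<in> B) \<omega>"
    using XY A B unfolding cond_indep_def by blast
  then have "AE \<omega> in M. real_cond_exp M F eAB \<omega> = pA \<omega> * real_cond_exp M F eB \<omega>"
    unfolding cond_prob_def gen_sigma_def F_def pA_def eA_def eB_def eAB_def .
  then have indep: "AE \<omega> in M. I \<omega> * real_cond_exp M F eAB \<omega> = (I \<omega> * pA \<omega>) * real_cond_exp M F eB \<omega>"
    by eventually_elim simp
  have "(\<integral>\<omega>. indicator A (X \<omega>) * indicator B (Y \<omega>) * indicator C (Z \<omega>) \<partial>M) = (\<integral>\<omega>. I \<omega> * eAB \<omega> \<partial>M)"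
    by (intro Bochner_Integration.integral_cong) (auto simp: I_def eAB_def indicator_def)
  also have "\<dots> = (\<integral>\<omega>. I \<omega> * real_cond_exp M F eAB \<omega> \<partial>M)"
    by (intro integral_mult_real_cond_exp[OF F I_F _ meas(3), symmetric]) (auto simp: I_def eAB_def)
  also have "\<dots> = (\<integral>\<omega>. (I \<omega> * pA \<omega>) * real_cond_exp M F eB \<omega> \<partial>M)"
    using indep unfolding pA_def by (intro integral_cong_AE) simp_all
  also have "\<dots> = (\<integral>\<omega>. (I \<omega> * pA \<omega>) * eB \<omega> \<partial>M)"
    by (intro integral_mult_real_cond_exp[OF F IpA_F IpA_bound meas(2)]) (auto simp: eB_def)
  also have "\<dots> = (\<integral>\<omega>. cond_prob M Z MZ (\<lambda>\<omega>. X \<omega> \<in> A) \<omega> * indicator B (Y \<omega>) * indicator C (Z \<omega>) \<partial>M)"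
    unfolding cond_prob_def gen_sigma_def pA_def eA_def F_def
    by (intro Bochner_Integration.integral_cong) (auto simp: I_def eB_def indicator_def)
  finally show ?thesis .
qed

lemma cond_prob_eq_of_cond_indep:
  assumes V[measurable]: "V \<in> M \<rightarrow>\<^sub>M N" and G: "G \<in> M \<rightarrow>\<^sub>M K" and u: "u \<in> N \<rightarrow>\<^sub>M K"
    and G_eq: "\<And>\<omega>. \<omega> \<in> space M \<Longrightarrow> G \<omega> = u (V \<omega>)"
    and Y[measurable]: "Y \<in> M \<rightarrow>\<^sub>M NY" and B[measurable]: "B \<in> sets NY"
    and VY: "cond_indep M V N Y NY G K"
  shows "AE \<omega> in M. cond_prob M V N (\<lambda>\<omega>. Y \<omega> \<in> B) \<omega> = cond_prob M G K (\<lambda>\<omega>. Y \<omega> \<in> B) \<omega>"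
proof -
  define FG where "FG = vimage_algebra (space M) G K"
  have FG: "sigma_finite_subalgebra M FG"
    unfolding FG_def by (rule sigma_finite_subalgebra_vimage_algebra[OF G])
  define eB where "eB \<omega> = (of_bool (Y \<omega> \<in> B) :: real)" for \<omega>
  have eB: "eB \<in> borel_measurable M" "\<And>\<omega>. \<omega> \<in> space M \<Longrightarrow> 0 \<le> eB \<omega> \<and> eB \<omega> \<le> 1"
    unfolding eB_def by simp_all
  define t where "t = real_cond_exp M FG eB"
  have t_bound: "AE \<omega> in M. 0 \<le> t \<omega> \<and> t \<omega> \<le> 1" "AE \<omega> in M. \<bar>t \<omega>\<bar> \<le> 1"
    using real_cond_exp_unit_interval[OF FG eB] unfolding t_def by auto
  have t_FG: "t \<in> borel_measurable FG" unfolding t_def by simp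
  have "AE \<omega> in M. real_cond_exp M (vimage_algebra (space M) V N) eB \<omega> = t \<omega>"
  proof (rule real_cond_exp_vimage_algebra_charact[OF V Int_stable_generator_sets])
    show "integrable M eB" using eB by (intro integrable_abs_le_1 AE_I2) auto
    show "integrable M t" using real_cond_exp_unit_interval(3)[OF FG eB] unfolding t_def .
    show "t \<in> borel_measurable (vimage_algebra (space M) V N)"
      using measurable_vimage_algebra_factor[OF V G u G_eq t_FG[unfolded FG_def]] .
  next
    fix C assume C[measurable]: "C \<in> sets N"
    define eC where "eC \<omega> = (of_bool (V \<omega> \<in> C) :: real)" for \<omega>
    define eCB where "eCB \<omega> = (of_bool (V \<omega> \<in> C \<and> Y \<omega> \<in> B) :: real)" for \<omega>
    have eC: "eC \<in> borel_measurable M" and eCB: "eCB \<in> borel_measurable M"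
      unfolding eC_def eCB_def by simp_all
    have "AE \<omega> in M. cond_prob M G K (\<lambda>\<omega>. V \<omega> \<in> C \<and> Y \<omega> \<in> B) \<omega>
        = cond_prob M G K (\<lambda>\<omega>. V \<omega> \<in> C) \<omega> * cond_prob M G K (\<lambda>\<omega>. Y \<omega> \<in> B) \<omega>"
      using VY C B unfolding cond_indep_def by blast
    then have "AE \<omega> in M. real_cond_exp M FG eCB \<omega> = t \<omega> * real_cond_exp M FG eC \<omega>"
      unfolding cond_prob_def gen_sigma_def FG_def eCB_def eC_def t_def eB_def
      by eventually_elim simp
    then have "(\<integral>\<omega>. real_cond_exp M FG eCB \<omega> \<partial>M) = (\<integral>\<omega>. t \<omega> * real_cond_exp M FG eC \<omega> \<partial>M)"
      using measurable_from_subalg[OF sigma_finite_subalgebra.subalg[OF FG] t_FG]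
      by (intro integral_cong_AE) simp_all
    moreover have "(\<integral>\<omega>. real_cond_exp M FG eCB \<omega> \<partial>M) = (\<integral>\<omega>. eCB \<omega> \<partial>M)"
      using eCB by (intro sigma_finite_subalgebra.real_cond_exp_int(2)[OF FG] integrable_abs_le_1 AE_I2)
        (auto simp: eCB_def)
    moreover have "(\<integral>\<omega>. t \<omega> * real_cond_exp M FG eC \<omega> \<partial>M) = (\<integral>\<omega>. t \<omega> * eC \<omega> \<partial>M)"
      using t_FG t_bound(2) eC by (intro integral_mult_real_cond_exp[OF FG]) (auto simp: eC_def)
    ultimately show "(\<integral>\<omega>. indicator C (V \<omega>) * eB \<omega> \<partial>M) = (\<integral>\<omega>. indicator C (V \<omega>) * t \<omega> \<partial>M)"
      by (simp add: eCB_def eC_def eB_def indicator_def mult.commute of_bool_conj)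
  qed (use t_bound in \<open>auto simp: eB_def\<close>)
  then show ?thesis unfolding cond_prob_def gen_sigma_def eB_def t_def FG_def .
qed

end

section \<open>Independent rows satisfying the null hypothesis\<close>

locale null_sample = prob_space M for M :: "'a measure" +
  fixes n :: nat and Yv Xv :: "nat \<Rightarrow> 'a \<Rightarrow> real" and Zv :: "nat \<Rightarrow> 'a \<Rightarrow> 'z" and MZ :: "'z measure"
  assumes measurable_Y: "\<And>i. i < n \<Longrightarrow> Yv i \<in> borel_measurable M"
    and measurable_X: "\<And>i. i < n \<Longrightarrow> Xv i \<in> borel_measurable M"
    and measurable_Z: "\<And>i. i < n \<Longrightarrow> Zv i \<in> M \<rightarrow>\<^sub>M MZ"
    and indep_rows: "indep_vars (\<lambda>_. borel \<Otimes>\<^sub>M borel \<Otimes>\<^sub>M MZ) (\<lambda>i \<omega>. (Yv i \<omega>, Xv i \<omega>, Zv i \<omega>)) {..<n}"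
    and cond_indep_rows: "\<And>i. i < n \<Longrightarrow> cond_indep M (Xv i) borel (Yv i) borel (Zv i) MZ"
begin

abbreviation "VX \<equiv> PiM {..<n} (\<lambda>_. borel :: real measure)"
abbreviation "VZ \<equiv> PiM {..<n} (\<lambda>_. MZ)"
abbreviation "Nobs \<equiv> (borel :: real measure) \<Otimes>\<^sub>M (borel :: real measure) \<Otimes>\<^sub>M MZ"

definition "obs i \<omega> = (Yv i \<omega>, Xv i \<omega>, Zv i \<omega>)"
definition "xvec = rvec n Xv"
definition "yvec = rvec n Yv"
definition "zvec = rvec n Zv"
definition "yzvec \<omega> = (yvec \<omega>, zvec \<omega>)"
definition "cp_row i A = cond_prob M (Zv i) MZ (\<lambda>\<omega>. Xv i \<omega> \<in> A)"
definition "cp_z A = cond_prob M zvec VZ (\<lambda>\<omega>. xvec \<omega> \<in> A)"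

lemma measurable_obs: "i < n \<Longrightarrow> obs i \<in> M \<rightarrow>\<^sub>M Nobs"
  unfolding obs_def using measurable_X measurable_Y measurable_Z by measurable

lemma measurable_xvec[measurable]: "xvec \<in> M \<rightarrow>\<^sub>M VX"
  unfolding xvec_def rvec_def by (rule measurable_restrict) (use measurable_X in auto)

lemma measurable_yvec[measurable]: "yvec \<in> M \<rightarrow>\<^sub>M VX"
  unfolding yvec_def rvec_def by (rule measurable_restrict) (use measurable_Y in auto)

lemma measurable_zvec[measurable]: "zvec \<in> M \<rightarrow>\<^sub>M VZ"
  unfolding zvec_def rvec_def by (rule measurable_restrict) (use measurable_Z in auto)

lemma measurable_yzvec[measurable]: "yzvec \<in> M \<rightarrow>\<^sub>M VX \<Otimes>\<^sub>M VZ"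
  unfolding yzvec_def by measurable

lemma measurable_obs_function:
  assumes i: "i < n" and u: "u \<in> borel_measurable Nobs"
  shows "(\<lambda>\<omega>. u (Yv i \<omega>, Xv i \<omega>, Zv i \<omega>)) \<in> borel_measurable (vimage_algebra (space M) (obs i) Nobs)"
  using measurable_vimage_algebra_comp[OF measurable_obs[OF i] u] unfolding obs_def .

lemma cp_row_measurable:
  assumes i: "i < n"
  shows "cp_row i A \<in> borel_measurable (vimage_algebra (space M) (obs i) Nobs)"
    and "cp_row i A \<in> borel_measurable (vimage_algebra (space M) zvec VZ)"
proof -
  have Z: "cp_row i A \<in> borel_measurable (vimage_algebra (space M) (Zv i) MZ)"
    unfolding cp_row_def cond_prob_def gen_sigma_def by (rule borel_measurable_cond_exp)
  show "cp_row i A \<in> borel_measurable (vimage_algebra (space M) (obs i) Nobs)"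
    by (rule measurable_vimage_algebra_factor[OF measurable_obs[OF i] measurable_Z[OF i] _ _ Z,
          where u="\<lambda>t. snd (snd t)"]) (simp_all add: obs_def)
  show "cp_row i A \<in> borel_measurable (vimage_algebra (space M) zvec VZ)"
    by (rule measurable_vimage_algebra_factor[OF measurable_zvec measurable_Z[OF i]
          measurable_component_singleton _ Z]) (use i in \<open>auto simp: zvec_def rvec_def\<close>)
qed

lemma cp_row_unit_interval:
  assumes i: "i < n" and A: "A \<in> sets borel"
  shows "AE \<omega> in M. 0 \<le> cp_row i A \<omega> \<and> cp_row i A \<omega> \<le> 1" and "integrable M (cp_row i A)"
proof -
  have "(\<lambda>\<omega>. of_bool (Xv i \<omega> \<in> A) :: real) \<in> borel_measurable M"
    using measurable_X[OF i] A by measurable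
  from real_cond_exp_unit_interval[OF sigma_finite_subalgebra_vimage_algebra[OF measurable_Z[OF i]] this]
  show "AE \<omega> in M. 0 \<le> cp_row i A \<omega> \<and> cp_row i A \<omega> \<le> 1" and "integrable M (cp_row i A)"
    unfolding cp_row_def cond_prob_def gen_sigma_def by simp_all
qed

lemma cp_z_measurable:
  "cp_z A \<in> borel_measurable (vimage_algebra (space M) zvec VZ)" "cp_z A \<in> borel_measurable M"
  unfolding cp_z_def cond_prob_def gen_sigma_def by (rule borel_measurable_cond_exp borel_measurable_cond_exp2)+

lemma cp_z_unit_interval:
  assumes A: "A \<in> sets VX"
  shows "AE \<omega> in M. 0 \<le> cp_z A \<omega> \<and> cp_z A \<omega> \<le> 1" and "AE \<omega> in M. \<bar>cp_z A \<omega>\<bar> \<le> 1"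
    and "integrable M (cp_z A)"
proof -
  have "(\<lambda>\<omega>. of_bool (xvec \<omega> \<in> A) :: real) \<in> borel_measurable M"
    using A by measurable
  from real_cond_exp_unit_interval[OF sigma_finite_subalgebra_vimage_algebra[OF measurable_zvec] this]
  show "AE \<omega> in M. 0 \<le> cp_z A \<omega> \<and> cp_z A \<omega> \<le> 1" and "AE \<omega> in M. \<bar>cp_z A \<omega>\<bar> \<le> 1"
    and "integrable M (cp_z A)"
    unfolding cp_z_def cond_prob_def gen_sigma_def by simp_all
qed

text \<open>Independence of the rows factorises both sides over the rows, and on each row the null hypothesis applies.\<close>
lemma integral_rectangles_eq_prod_cp_row:
  assumes A: "\<And>i. i < n \<Longrightarrow> A i \<in> sets borel" and B: "\<And>i. i < n \<Longrightarrow> B i \<in> sets borel"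
    and C: "\<And>i. i < n \<Longrightarrow> C i \<in> sets MZ"
  shows "(\<integral>\<omega>. indicator (PiE {..<n} A) (xvec \<omega>) * indicator (PiE {..<n} B) (yvec \<omega>)
            * indicator (PiE {..<n} C) (zvec \<omega>) \<partial>M)
       = (\<integral>\<omega>. (\<Prod>i<n. cp_row i (A i) \<omega>) * indicator (PiE {..<n} B) (yvec \<omega>)
            * indicator (PiE {..<n} C) (zvec \<omega>) \<partial>M)"
proof -
  define BC where "BC i \<omega> = (indicator (B i) (Yv i \<omega>) * indicator (C i) (Zv i \<omega>) :: real)" for i \<omega>
  have BC_row: "BC i \<in> borel_measurable (vimage_algebra (space M) (obs i) Nobs)" if i: "i < n" for i
  proof -
    have "(\<lambda>t. indicator (B i) (fst t) * indicator (C i) (snd (snd t)) :: real) \<in> borel_measurable Nobs"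
      using B[OF i] C[OF i] by measurable
    from measurable_obs_function[OF i this] show ?thesis by (simp add: BC_def[abs_def])
  qed
  have ABC_row: "(\<lambda>\<omega>. indicator (A i) (Xv i \<omega>) * BC i \<omega>) \<in> borel_measurable (vimage_algebra (space M) (obs i) Nobs)"
    if i: "i < n" for i
  proof -
    have "(\<lambda>t. indicator (A i) (fst (snd t)) :: real) \<in> borel_measurable Nobs"
      using A[OF i] by measurable
    from borel_measurable_times[OF measurable_obs_function[OF i this] BC_row[OF i]] show ?thesis
      by simp
  qed
  have pBC_row: "(\<lambda>\<omega>. cp_row i (A i) \<omega> * BC i \<omega>) \<in> borel_measurable (vimage_algebra (space M) (obs i) Nobs)"
    if i: "i < n" for i
    using cp_row_measurable(1)[OF i] BC_row[OF i] by (rule borel_measurable_times)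
  have row_M: "f \<in> borel_measurable M" if "i < n" "f \<in> borel_measurable (vimage_algebra (space M) (obs i) Nobs)" for f i
    using measurable_from_subalg[OF subalgebra_vimage_algebra[OF measurable_obs]] that by blast
  have "(\<integral>\<omega>. indicator (PiE {..<n} A) (xvec \<omega>) * indicator (PiE {..<n} B) (yvec \<omega>)
            * indicator (PiE {..<n} C) (zvec \<omega>) \<partial>M)
      = (\<integral>\<omega>. (\<Prod>i<n. indicator (A i) (Xv i \<omega>) * BC i \<omega>) \<partial>M)"
    by (simp add: xvec_def yvec_def zvec_def BC_def indicator_PiE_rvec prod.distrib mult.assoc)
  also have "\<dots> = (\<Prod>i<n. \<integral>\<omega>. indicator (A i) (Xv i \<omega>) * BC i \<omega> \<partial>M)"
  proof (intro indep_vars_integral_prod_vimage[where N=Nobs and W=obs])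
    fix i assume "i \<in> {..<n}"
    then have i: "i < n" by simp
    show "(\<lambda>\<omega>. indicator (A i) (Xv i \<omega>) * BC i \<omega>) \<in> borel_measurable (vimage_algebra (space M) (obs i) Nobs)"
      using ABC_row[OF i] .
    show "integrable M (\<lambda>\<omega>. indicator (A i) (Xv i \<omega>) * BC i \<omega>)"
      using row_M[OF i ABC_row[OF i]] by (intro integrable_abs_le_1 AE_I2) (simp_all add: BC_def indicator_def)
  qed (use indep_rows in \<open>simp_all add: obs_def[abs_def]\<close>)
  also have "\<dots> = (\<Prod>i<n. \<integral>\<omega>. cp_row i (A i) \<omega> * BC i \<omega> \<partial>M)"
    unfolding BC_def cp_row_def mult.assoc[symmetric]
    using cond_indep_integral_indicator[OF measurable_X measurable_Y measurable_Z cond_indep_rows]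
      A B C by (intro prod.cong) auto
  also have "\<dots> = (\<integral>\<omega>. (\<Prod>i<n. cp_row i (A i) \<omega> * BC i \<omega>) \<partial>M)"
  proof (intro indep_vars_integral_prod_vimage[where N=Nobs and W=obs, symmetric])
    fix i assume "i \<in> {..<n}"
    then have i: "i < n" by simp
    show "integrable M (\<lambda>\<omega>. cp_row i (A i) \<omega> * BC i \<omega>)"
      by (rule integrable_mult_abs_le_1(2)[OF cp_row_unit_interval(2)[OF i A[OF i]] row_M[OF i BC_row[OF i]]])
        (simp add: BC_def indicator_def)
  qed (use indep_rows pBC_row in \<open>simp_all add: obs_def[abs_def]\<close>)
  also have "\<dots> = (\<integral>\<omega>. (\<Prod>i<n. cp_row i (A i) \<omega>) * indicator (PiE {..<n} B) (yvec \<omega>)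
            * indicator (PiE {..<n} C) (zvec \<omega>) \<partial>M)"
    by (simp add: yvec_def zvec_def BC_def indicator_PiE_rvec prod.distrib mult.assoc)
  finally show ?thesis .
qed

lemma cp_z_PiE:
  assumes A: "\<And>i. i < n \<Longrightarrow> A i \<in> sets borel"
  shows "AE \<omega> in M. cp_z (PiE {..<n} A) \<omega> = (\<Prod>i<n. cp_row i (A i) \<omega>)"
proof -
  have A_VX: "PiE {..<n} A \<in> sets VX" using A by (intro sets_PiM_I_finite) auto
  have "AE \<omega> in M. \<forall>i\<in>{..<n}. 0 \<le> cp_row i (A i) \<omega> \<and> cp_row i (A i) \<omega> \<le> 1"
    using cp_row_unit_interval(1) A by (intro AE_finite_allI) auto
  then have bound: "AE \<omega> in M. 0 \<le> (\<Prod>i<n. cp_row i (A i) \<omega>) \<and> (\<Prod>i<n. cp_row i (A i) \<omega>) \<le> 1"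
    by eventually_elim (auto intro: prod_nonneg prod_le_1)
  have meas: "(\<lambda>\<omega>. \<Prod>i<n. cp_row i (A i) \<omega>) \<in> borel_measurable (vimage_algebra (space M) zvec VZ)"
    using cp_row_measurable(2) by (intro borel_measurable_prod) auto
  have "AE \<omega> in M. real_cond_exp M (vimage_algebra (space M) zvec VZ)
      (\<lambda>\<omega>. of_bool (xvec \<omega> \<in> PiE {..<n} A)) \<omega> = (\<Prod>i<n. cp_row i (A i) \<omega>)"
  proof (intro real_cond_exp_vimage_algebra_charact[OF measurable_zvec Int_stable_generator_PiM[OF finite_lessThan]])
    show "integrable M (\<lambda>\<omega>. of_bool (xvec \<omega> \<in> PiE {..<n} A) :: real)"
      using A_VX by (intro integrable_abs_le_1 AE_I2) auto
  next
    show "integrable M (\<lambda>\<omega>. \<Prod>i<n. cp_row i (A i) \<omega>)"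
    proof (rule integrable_abs_le_1)
      show "AE \<omega> in M. \<bar>\<Prod>i<n. cp_row i (A i) \<omega>\<bar> \<le> 1"
        using bound by eventually_elim simp
    qed (rule measurable_from_subalg[OF subalgebra_vimage_algebra[OF measurable_zvec] meas])
  next
    fix S assume "S \<in> {PiE {..<n} C | C. \<forall>i\<in>{..<n}. C i \<in> sets MZ}"
    then obtain C where S: "S = PiE {..<n} C" and C: "\<And>i. i < n \<Longrightarrow> C i \<in> sets MZ" by auto
    have UNIV: "indicator (PiE {..<n} (\<lambda>_. UNIV)) (yvec \<omega>) = (1 :: real)" for \<omega>
      by (simp add: yvec_def indicator_PiE_rvec)
    from integral_rectangles_eq_prod_cp_row[OF A _ C, where B="\<lambda>_. UNIV"]
    show "(\<integral>\<omega>. indicator S (zvec \<omega>) * of_bool (xvec \<omega> \<in> PiE {..<n} A) \<partial>M)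
        = (\<integral>\<omega>. indicator S (zvec \<omega>) * (\<Prod>i<n. cp_row i (A i) \<omega>) \<partial>M)"
      unfolding UNIV S by (simp add: indicator_def mult.commute)
  qed (use bound meas in \<open>auto elim!: eventually_mono\<close>)
  then show ?thesis unfolding cp_z_def cond_prob_def gen_sigma_def .
qed

lemma integral_x_rectangle_yz:
  assumes A: "\<And>i. i < n \<Longrightarrow> A i \<in> sets borel" and S: "S \<in> sets (VX \<Otimes>\<^sub>M VZ)"
  shows "(\<integral>\<omega>. indicator S (yzvec \<omega>) * indicator (PiE {..<n} A) (xvec \<omega>) \<partial>M)
       = (\<integral>\<omega>. indicator S (yzvec \<omega>) * cp_z (PiE {..<n} A) \<omega> \<partial>M)"
proof -
  have A_VX: "PiE {..<n} A \<in> sets VX" using A by (intro sets_PiM_I_finite) auto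
  have ind_x: "(\<lambda>\<omega>. indicator (PiE {..<n} A) (xvec \<omega>) :: real) \<in> borel_measurable M"
    using A_VX by measurable
  show ?thesis
  proof (rule integral_indicator_eq_on_generator[OF measurable_yzvec measurable_yzvec
        Int_stable_generator_pair[OF Int_stable_generator_PiM Int_stable_generator_PiM] _ _ _ _ _ S])
    show "integrable M (\<lambda>\<omega>. indicator (PiE {..<n} A) (xvec \<omega>) :: real)"
      using ind_x by (rule integrable_abs_le_1) simp
    show "integrable M (cp_z (PiE {..<n} A))" by (rule cp_z_unit_interval(3)[OF A_VX])
    show "AE \<omega> in M. 0 \<le> cp_z (PiE {..<n} A) \<omega>"
      using cp_z_unit_interval(1)[OF A_VX] by eventually_elim simp
  next
    fix S' assume "S' \<in> {a \<times> b | a b. a \<in> {PiE {..<n} B | B. \<forall>i\<in>{..<n}. B i \<in> sets (borel :: real measure)}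
                                   \<and> b \<in> {PiE {..<n} C | C. \<forall>i\<in>{..<n}. C i \<in> sets MZ}}"
    then obtain B C where S': "S' = PiE {..<n} B \<times> PiE {..<n} C"
      and B: "\<And>i. i < n \<Longrightarrow> B i \<in> sets borel" and C: "\<And>i. i < n \<Longrightarrow> C i \<in> sets MZ"
      by auto
    have "(\<integral>\<omega>. indicator S' (yzvec \<omega>) * indicator (PiE {..<n} A) (xvec \<omega>) \<partial>M)
        = (\<integral>\<omega>. indicator (PiE {..<n} A) (xvec \<omega>) * indicator (PiE {..<n} B) (yvec \<omega>)
            * (indicator (PiE {..<n} C) (zvec \<omega>) :: real) \<partial>M)"
      unfolding S' yzvec_def indicator_times by (simp add: ac_simps)
    also have "\<dots> = (\<integral>\<omega>. (\<Prod>i<n. cp_row i (A i) \<omega>) * indicator (PiE {..<n} B) (yvec \<omega>)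
            * indicator (PiE {..<n} C) (zvec \<omega>) \<partial>M)"
      by (rule integral_rectangles_eq_prod_cp_row[OF A B C])
    also have "\<dots> = (\<integral>\<omega>. cp_z (PiE {..<n} A) \<omega> * indicator (PiE {..<n} B) (yvec \<omega>)
            * indicator (PiE {..<n} C) (zvec \<omega>) \<partial>M)"
    proof (rule integral_cong_AE)
      have "PiE {..<n} B \<in> sets VX" "PiE {..<n} C \<in> sets VZ"
        using B C by (auto intro!: sets_PiM_I_finite)
      moreover have "(\<lambda>\<omega>. \<Prod>i<n. cp_row i (A i) \<omega>) \<in> borel_measurable M"
        using cp_row_measurable(2) measurable_from_subalg[OF subalgebra_vimage_algebra[OF measurable_zvec]]
        by (intro borel_measurable_prod) blast
      ultimately show "(\<lambda>\<omega>. (\<Prod>i<n. cp_row i (A i) \<omega>) * indicator (PiE {..<n} B) (yvec \<omega>)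
            * indicator (PiE {..<n} C) (zvec \<omega>)) \<in> borel_measurable M"
        and "(\<lambda>\<omega>. cp_z (PiE {..<n} A) \<omega> * indicator (PiE {..<n} B) (yvec \<omega>)
            * indicator (PiE {..<n} C) (zvec \<omega>)) \<in> borel_measurable M"
        using cp_z_measurable(2) by measurable
      show "AE \<omega> in M. (\<Prod>i<n. cp_row i (A i) \<omega>) * indicator (PiE {..<n} B) (yvec \<omega>)
            * indicator (PiE {..<n} C) (zvec \<omega>) = cp_z (PiE {..<n} A) \<omega> * indicator (PiE {..<n} B) (yvec \<omega>)
            * indicator (PiE {..<n} C) (zvec \<omega>)"
      proof -
        have "AE \<omega> in M. cp_z (PiE {..<n} A) \<omega> = (\<Prod>i<n. cp_row i (A i) \<omega>)"
          by (rule cp_z_PiE) (rule A)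
        then show ?thesis by eventually_elim simp
      qed
    qed
    also have "\<dots> = (\<integral>\<omega>. indicator S' (yzvec \<omega>) * cp_z (PiE {..<n} A) \<omega> \<partial>M)"
      unfolding S' yzvec_def indicator_times by (simp add: ac_simps)
    finally show "(\<integral>\<omega>. indicator S' (yzvec \<omega>) * indicator (PiE {..<n} A) (xvec \<omega>) \<partial>M)
        = (\<integral>\<omega>. indicator S' (yzvec \<omega>) * cp_z (PiE {..<n} A) \<omega> \<partial>M)" .
  qed simp_all
qed

text \<open>
  Both sides are finite measures in \<open>A\<close>: the right-hand side because, by self-adjointness of the
  conditional expectation given \<open>z\<close>, it equals \<open>\<integral> 1\<^sub>A(x) E[1\<^sub>S(y, z) | z]\<close>.
\<close>
lemma integral_x_yz_eq_cp_z:
  assumes A: "A \<in> sets VX" and S: "S \<in> sets (VX \<Otimes>\<^sub>M VZ)"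
  shows "(\<integral>\<omega>. indicator S (yzvec \<omega>) * indicator A (xvec \<omega>) \<partial>M)
       = (\<integral>\<omega>. indicator S (yzvec \<omega>) * cp_z A \<omega> \<partial>M)"
proof -
  define F where "F = vimage_algebra (space M) zvec VZ"
  have F: "sigma_finite_subalgebra M F"
    unfolding F_def by (rule sigma_finite_subalgebra_vimage_algebra[OF measurable_zvec])
  define k where "k \<omega> = (indicator S (yzvec \<omega>) :: real)" for \<omega>
  have k_meas: "k \<in> borel_measurable M" unfolding k_def using S by measurable
  have k_unit: "\<And>\<omega>. \<omega> \<in> space M \<Longrightarrow> 0 \<le> k \<omega> \<and> k \<omega> \<le> 1" by (simp add: k_def)
  note k = k_meas k_unit
  define hk where "hk = real_cond_exp M F k"
  have adjoint: "(\<integral>\<omega>. k \<omega> * cp_z T \<omega> \<partial>M) = (\<integral>\<omega>. indicator T (xvec \<omega>) * hk \<omega> \<partial>M)"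
    if T: "T \<in> sets VX" for T
  proof -
    have "(\<lambda>\<omega>. of_bool (xvec \<omega> \<in> T) :: real) \<in> borel_measurable M" using T by measurable
    from real_cond_exp_self_adjoint[OF F this _ k]
    show ?thesis
      unfolding cp_z_def cond_prob_def gen_sigma_def F_def hk_def
      by (simp add: indicator_def mult.commute)
  qed
  have "(\<integral>\<omega>. indicator A (xvec \<omega>) * k \<omega> \<partial>M) = (\<integral>\<omega>. indicator A (xvec \<omega>) * hk \<omega> \<partial>M)"
  proof (rule integral_indicator_eq_on_generator[OF measurable_xvec measurable_xvec
        Int_stable_generator_PiM[OF finite_lessThan] _ _ _ _ _ A])
    show "integrable M k" using k by (intro integrable_abs_le_1 AE_I2) auto
    show "integrable M hk" unfolding hk_def by (rule real_cond_exp_unit_interval(3)[OF F k])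
    show "AE \<omega> in M. 0 \<le> hk \<omega>"
      using real_cond_exp_unit_interval(1)[OF F k] unfolding hk_def by (auto elim: eventually_mono)
  next
    fix T assume "T \<in> {PiE {..<n} B | B. \<forall>i\<in>{..<n}. B i \<in> sets (borel :: real measure)}"
    then obtain B where T: "T = PiE {..<n} B" and B: "\<And>i. i < n \<Longrightarrow> B i \<in> sets borel" by auto
    have "(\<integral>\<omega>. indicator T (xvec \<omega>) * k \<omega> \<partial>M) = (\<integral>\<omega>. k \<omega> * cp_z T \<omega> \<partial>M)"
      using integral_x_rectangle_yz[OF B S] unfolding T k_def by (simp add: mult.commute)
    also have "\<dots> = (\<integral>\<omega>. indicator T (xvec \<omega>) * hk \<omega> \<partial>M)"
      using B by (intro adjoint) (auto simp: T intro!: sets_PiM_I_finite)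
    finally show "(\<integral>\<omega>. indicator T (xvec \<omega>) * k \<omega> \<partial>M) = (\<integral>\<omega>. indicator T (xvec \<omega>) * hk \<omega> \<partial>M)" .
  qed (use k in auto)
  also have "\<dots> = (\<integral>\<omega>. k \<omega> * cp_z A \<omega> \<partial>M)" by (rule adjoint[OF A, symmetric])
  finally show ?thesis unfolding k_def by (simp add: mult.commute)
qed

lemma cond_prob_x_given_yz:
  assumes A: "A \<in> sets VX"
  shows "AE \<omega> in M. cond_prob M yzvec (VX \<Otimes>\<^sub>M VZ) (\<lambda>\<omega>. xvec \<omega> \<in> A) \<omega> = cp_z A \<omega>"
  unfolding cond_prob_def gen_sigma_def
proof (rule real_cond_exp_vimage_algebra_charact[OF measurable_yzvec Int_stable_generator_sets])
  show "integrable M (\<lambda>\<omega>. of_bool (xvec \<omega> \<in> A) :: real)"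
    using A by (intro integrable_abs_le_1 AE_I2) auto
  show "integrable M (cp_z A)" by (rule cp_z_unit_interval(3)[OF A])
  show "AE \<omega> in M. 0 \<le> cp_z A \<omega>" using cp_z_unit_interval(1)[OF A] by eventually_elim simp
  show "cp_z A \<in> borel_measurable (vimage_algebra (space M) yzvec (VX \<Otimes>\<^sub>M VZ))"
    by (rule measurable_vimage_algebra_factor[OF measurable_yzvec measurable_zvec measurable_snd
          _ cp_z_measurable(1)]) (simp add: yzvec_def)
next
  fix S assume "S \<in> sets (VX \<Otimes>\<^sub>M VZ)"
  from integral_x_yz_eq_cp_z[OF A this]
  show "(\<integral>\<omega>. indicator S (yzvec \<omega>) * of_bool (xvec \<omega> \<in> A) \<partial>M) = (\<integral>\<omega>. indicator S (yzvec \<omega>) * cp_z A \<omega> \<partial>M)"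
    by (simp add: indicator_def)
qed simp

end

locale null_sample_gh = null_sample M n Yv Xv Zv MZ
  for M :: "'a measure" and n Yv Xv and Zv :: "nat \<Rightarrow> 'a \<Rightarrow> 'z" and MZ :: "'z measure" +
  fixes g :: "'z \<Rightarrow> 'g::topological_space" and h :: "'z \<Rightarrow> 'h::topological_space"
  assumes measurable_g: "g \<in> borel_measurable MZ" and measurable_h: "h \<in> borel_measurable MZ"
begin

abbreviation "VG \<equiv> PiM {..<n} (\<lambda>_. borel :: 'g measure)"
abbreviation "VH \<equiv> PiM {..<n} (\<lambda>_. borel :: 'h measure)"

definition "gvec \<omega> = vmap n g (zvec \<omega>)"
definition "hvec \<omega> = vmap n h (zvec \<omega>)"
definition "ghvec \<omega> = (gvec \<omega>, hvec \<omega>)"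
definition "yghvec \<omega> = (yvec \<omega>, gvec \<omega>, hvec \<omega>)"
definition "cp_gh A = cond_prob M ghvec (VG \<Otimes>\<^sub>M VH) (\<lambda>\<omega>. xvec \<omega> \<in> A)"

lemma measurable_vmap_g[measurable]: "vmap n g \<in> VZ \<rightarrow>\<^sub>M VG"
  unfolding vmap_def by (rule measurable_restrict) (use measurable_g in measurable)

lemma measurable_vmap_h[measurable]: "vmap n h \<in> VZ \<rightarrow>\<^sub>M VH"
  unfolding vmap_def by (rule measurable_restrict) (use measurable_h in measurable)

lemma measurable_gvec[measurable]: "gvec \<in> M \<rightarrow>\<^sub>M VG"
  unfolding gvec_def by measurable

lemma measurable_hvec[measurable]: "hvec \<in> M \<rightarrow>\<^sub>M VH"
  unfolding hvec_def by measurable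

lemma measurable_ghvec[measurable]: "ghvec \<in> M \<rightarrow>\<^sub>M VG \<Otimes>\<^sub>M VH"
  unfolding ghvec_def by measurable

lemma measurable_yghvec[measurable]: "yghvec \<in> M \<rightarrow>\<^sub>M VX \<Otimes>\<^sub>M VG \<Otimes>\<^sub>M VH"
  unfolding yghvec_def by measurable

lemma measurable_ghvec_zvec:
  "f \<in> borel_measurable (vimage_algebra (space M) ghvec (VG \<Otimes>\<^sub>M VH)) \<Longrightarrow>
    f \<in> borel_measurable (vimage_algebra (space M) zvec VZ)"
  by (rule measurable_vimage_algebra_factor[OF measurable_zvec measurable_ghvec,
        where u="\<lambda>v. (vmap n g v, vmap n h v)"]) (simp_all add: ghvec_def gvec_def hvec_def)

lemma measurable_gvec_ghvec:
  "f \<in> borel_measurable (vimage_algebra (space M) gvec VG) \<Longrightarrow>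
    f \<in> borel_measurable (vimage_algebra (space M) ghvec (VG \<Otimes>\<^sub>M VH))"
  by (rule measurable_vimage_algebra_factor[OF measurable_ghvec measurable_gvec measurable_fst])
    (simp add: ghvec_def)

lemma cp_gh_measurable:
  "cp_gh A \<in> borel_measurable (vimage_algebra (space M) ghvec (VG \<Otimes>\<^sub>M VH))"
  unfolding cp_gh_def cond_prob_def gen_sigma_def by (rule borel_measurable_cond_exp)

lemma cp_gh_unit_interval:
  assumes A: "A \<in> sets VX"
  shows "AE \<omega> in M. 0 \<le> cp_gh A \<omega> \<and> cp_gh A \<omega> \<le> 1" and "AE \<omega> in M. \<bar>cp_gh A \<omega>\<bar> \<le> 1"
    and "integrable M (cp_gh A)"
proof -
  have "(\<lambda>\<omega>. of_bool (xvec \<omega> \<in> A) :: real) \<in> borel_measurable M"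
    using A by measurable
  from real_cond_exp_unit_interval[OF sigma_finite_subalgebra_vimage_algebra[OF measurable_ghvec] this]
  show "AE \<omega> in M. 0 \<le> cp_gh A \<omega> \<and> cp_gh A \<omega> \<le> 1" and "AE \<omega> in M. \<bar>cp_gh A \<omega>\<bar> \<le> 1"
    and "integrable M (cp_gh A)"
    unfolding cp_gh_def cond_prob_def gen_sigma_def by simp_all
qed

lemma integral_indicator_y_eq_cond_prob_g:
  assumes zy: "cond_indep M zvec VZ yvec VX gvec VG" and B: "B \<in> sets VX"
    and f: "f \<in> borel_measurable (vimage_algebra (space M) zvec VZ)" "AE \<omega> in M. \<bar>f \<omega>\<bar> \<le> 1"
  shows "(\<integral>\<omega>. f \<omega> * of_bool (yvec \<omega> \<in> B) \<partial>M)
       = (\<integral>\<omega>. f \<omega> * cond_prob M gvec VG (\<lambda>\<omega>. yvec \<omega> \<in> B) \<omega> \<partial>M)"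
proof -
  define Fz where "Fz = vimage_algebra (space M) zvec VZ"
  have Fz: "sigma_finite_subalgebra M Fz"
    unfolding Fz_def by (rule sigma_finite_subalgebra_vimage_algebra[OF measurable_zvec])
  have eB: "(\<lambda>\<omega>. of_bool (yvec \<omega> \<in> B) :: real) \<in> borel_measurable M"
    "\<And>\<omega>. \<omega> \<in> space M \<Longrightarrow> 0 \<le> (of_bool (yvec \<omega> \<in> B) :: real) \<and> (of_bool (yvec \<omega> \<in> B) :: real) \<le> 1"
    using B by simp_all
  have "(\<integral>\<omega>. f \<omega> * of_bool (yvec \<omega> \<in> B) \<partial>M)
      = (\<integral>\<omega>. f \<omega> * cond_prob M zvec VZ (\<lambda>\<omega>. yvec \<omega> \<in> B) \<omega> \<partial>M)"
    unfolding cond_prob_def gen_sigma_def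
    using integral_mult_real_cond_exp[OF Fz f[folded Fz_def] eB] unfolding Fz_def by simp
  also have "\<dots> = (\<integral>\<omega>. f \<omega> * cond_prob M gvec VG (\<lambda>\<omega>. yvec \<omega> \<in> B) \<omega> \<partial>M)"
    using cond_prob_eq_of_cond_indep[OF measurable_zvec measurable_gvec measurable_vmap_g _ measurable_yvec B zy]
      measurable_from_subalg[OF subalgebra_vimage_algebra[OF measurable_zvec] f(1)]
    by (intro integral_cong_AE) (auto simp: gvec_def cond_prob_def elim: eventually_mono)
  finally show ?thesis .
qed

text \<open>
  With \<open>k = 1\<^sub>R(g(Z), h(Z))\<close> and \<open>t = P(y \<in> B | g(Z))\<close>, which by \<open>Z \<perp> y | g(Z)\<close> is also
  \<open>P(y \<in> B | Z)\<close>, both sides reduce to \<open>\<integral> k t 1\<^sub>A(x)\<close>: first replace \<open>1\<^sub>A(x)\<close> by \<open>P(x \<in> A | Z)\<close>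
  (respectively \<open>P(x \<in> A | g(Z), h(Z))\<close>), then \<open>1\<^sub>B(y)\<close> by \<open>t\<close>, then undo the first step.
\<close>
lemma integral_x_rectangle_ygh:
  assumes A: "A \<in> sets VX" and zy: "cond_indep M zvec VZ yvec VX gvec VG"
    and B[measurable]: "B \<in> sets VX" and R[measurable]: "R \<in> sets (VG \<Otimes>\<^sub>M VH)"
  shows "(\<integral>\<omega>. indicator (B \<times> R) (yghvec \<omega>) * of_bool (xvec \<omega> \<in> A) \<partial>M)
       = (\<integral>\<omega>. indicator (B \<times> R) (yghvec \<omega>) * cp_gh A \<omega> \<partial>M)"
proof -
  define Fz where "Fz = vimage_algebra (space M) zvec VZ"
  define Fgh where "Fgh = vimage_algebra (space M) ghvec (VG \<Otimes>\<^sub>M VH)"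
  have Fz: "sigma_finite_subalgebra M Fz" and Fgh: "sigma_finite_subalgebra M Fgh"
    unfolding Fz_def Fgh_def by (rule sigma_finite_subalgebra_vimage_algebra; measurable)+
  define eA where "eA \<omega> = (of_bool (xvec \<omega> \<in> A) :: real)" for \<omega>
  define eB where "eB \<omega> = (of_bool (yvec \<omega> \<in> B) :: real)" for \<omega>
  have eA: "eA \<in> borel_measurable M" "\<And>\<omega>. \<omega> \<in> space M \<Longrightarrow> 0 \<le> eA \<omega> \<and> eA \<omega> \<le> 1"
    unfolding eA_def using A by simp_all
  define k where "k \<omega> = (indicator R (ghvec \<omega>) :: real)" for \<omega>
  have k_gh: "k \<in> borel_measurable Fgh"
    unfolding k_def Fgh_def by (rule measurable_vimage_algebra_comp[OF measurable_ghvec]) simp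
  have k_z: "k \<in> borel_measurable Fz"
    unfolding Fz_def by (rule measurable_ghvec_zvec[OF k_gh[unfolded Fgh_def]])
  have k_bound: "AE \<omega> in M. \<bar>k \<omega>\<bar> \<le> 1" by (simp add: k_def)
  define t where "t = cond_prob M gvec VG (\<lambda>\<omega>. yvec \<omega> \<in> B)"
  have t_gh: "t \<in> borel_measurable Fgh"
    unfolding t_def Fgh_def cond_prob_def gen_sigma_def by (rule measurable_gvec_ghvec) simp
  have t_z: "t \<in> borel_measurable Fz"
    unfolding Fz_def by (rule measurable_ghvec_zvec[OF t_gh[unfolded Fgh_def]])
  have t_bound: "AE \<omega> in M. \<bar>t \<omega>\<bar> \<le> 1"
    using real_cond_exp_unit_interval(2)[OF sigma_finite_subalgebra_vimage_algebra[OF measurable_gvec],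
        of "\<lambda>\<omega>. of_bool (yvec \<omega> \<in> B)"]
    unfolding t_def cond_prob_def gen_sigma_def by simp
  note y_to_t = integral_indicator_y_eq_cond_prob_g[OF zy B, folded Fz_def eB_def t_def]
  have cp_z_A: "cp_z A \<in> borel_measurable Fz" "AE \<omega> in M. \<bar>cp_z A \<omega>\<bar> \<le> 1"
    using cp_z_measurable(1) cp_z_unit_interval(2)[OF A] unfolding Fz_def by auto
  have cp_gh_A: "cp_gh A \<in> borel_measurable Fgh" "cp_gh A \<in> borel_measurable Fz"
    "AE \<omega> in M. \<bar>cp_gh A \<omega>\<bar> \<le> 1"
    using cp_gh_measurable measurable_ghvec_zvec[OF cp_gh_measurable] cp_gh_unit_interval(2)[OF A]
    unfolding Fgh_def Fz_def by auto
  have "(\<integral>\<omega>. indicator (B \<times> R) (yghvec \<omega>) * of_bool (xvec \<omega> \<in> A) \<partial>M)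
      = (\<integral>\<omega>. indicator (B \<times> ((\<lambda>v. (vmap n g v, vmap n h v)) -` R \<inter> space VZ)) (yzvec \<omega>)
            * indicator A (xvec \<omega>) \<partial>M)"
    using measurable_space[OF measurable_zvec]
    by (intro Bochner_Integration.integral_cong) (auto simp: yghvec_def yzvec_def gvec_def hvec_def indicator_def)
  also have "\<dots> = (\<integral>\<omega>. indicator (B \<times> ((\<lambda>v. (vmap n g v, vmap n h v)) -` R \<inter> space VZ)) (yzvec \<omega>)
            * cp_z A \<omega> \<partial>M)"
    by (rule integral_x_yz_eq_cp_z[OF A]) measurable
  also have "\<dots> = (\<integral>\<omega>. (k \<omega> * cp_z A \<omega>) * eB \<omega> \<partial>M)"
    using measurable_space[OF measurable_zvec]
    by (intro Bochner_Integration.integral_cong)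
      (auto simp: yzvec_def k_def eB_def ghvec_def gvec_def hvec_def indicator_def)
  also have "\<dots> = (\<integral>\<omega>. (k \<omega> * t \<omega>) * cp_z A \<omega> \<partial>M)"
    by (subst y_to_t[OF borel_measurable_times[OF k_z cp_z_A(1)] AE_abs_mult_le_1[OF k_bound cp_z_A(2)]])
      (simp add: ac_simps)
  also have "\<dots> = (\<integral>\<omega>. (k \<omega> * t \<omega>) * eA \<omega> \<partial>M)"
    unfolding cp_z_def cond_prob_def gen_sigma_def eA_def[symmetric] Fz_def[symmetric]
    by (rule integral_mult_real_cond_exp[OF Fz borel_measurable_times[OF k_z t_z]
          AE_abs_mult_le_1[OF k_bound t_bound] eA])
  also have "\<dots> = (\<integral>\<omega>. (k \<omega> * t \<omega>) * cp_gh A \<omega> \<partial>M)"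
    unfolding cp_gh_def cond_prob_def gen_sigma_def eA_def[symmetric] Fgh_def[symmetric]
    by (rule integral_mult_real_cond_exp[OF Fgh borel_measurable_times[OF k_gh t_gh]
          AE_abs_mult_le_1[OF k_bound t_bound] eA, symmetric])
  also have "\<dots> = (\<integral>\<omega>. (k \<omega> * cp_gh A \<omega>) * eB \<omega> \<partial>M)"
    by (subst y_to_t[OF borel_measurable_times[OF k_z cp_gh_A(2)] AE_abs_mult_le_1[OF k_bound cp_gh_A(3)]])
      (simp add: ac_simps)
  also have "\<dots> = (\<integral>\<omega>. indicator (B \<times> R) (yghvec \<omega>) * cp_gh A \<omega> \<partial>M)"
    by (intro Bochner_Integration.integral_cong) (auto simp: yghvec_def ghvec_def k_def eB_def indicator_def)
  finally show ?thesis .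
qed

lemma cond_prob_x_given_ygh:
  assumes A: "A \<in> sets VX" and zy: "cond_indep M zvec VZ yvec VX gvec VG"
  shows "AE \<omega> in M. cond_prob M yghvec (VX \<Otimes>\<^sub>M (VG \<Otimes>\<^sub>M VH)) (\<lambda>\<omega>. xvec \<omega> \<in> A) \<omega> = cp_gh A \<omega>"
  unfolding cond_prob_def gen_sigma_def
proof (rule real_cond_exp_vimage_algebra_charact[OF measurable_yghvec Int_stable_generator_pair_measure])
  show "integrable M (\<lambda>\<omega>. of_bool (xvec \<omega> \<in> A) :: real)"
    using A by (intro integrable_abs_le_1 AE_I2) auto
  show "integrable M (cp_gh A)" by (rule cp_gh_unit_interval(3)[OF A])
  show "AE \<omega> in M. 0 \<le> cp_gh A \<omega>" using cp_gh_unit_interval(1)[OF A] by eventually_elim simp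
  show "cp_gh A \<in> borel_measurable (vimage_algebra (space M) yghvec (VX \<Otimes>\<^sub>M (VG \<Otimes>\<^sub>M VH)))"
    by (rule measurable_vimage_algebra_factor[OF measurable_yghvec measurable_ghvec measurable_snd
          _ cp_gh_measurable]) (simp add: yghvec_def ghvec_def)
next
  fix S assume "S \<in> {a \<times> b |a b. a \<in> sets VX \<and> b \<in> sets (VG \<Otimes>\<^sub>M VH)}"
  then show "(\<integral>\<omega>. indicator S (yghvec \<omega>) * of_bool (xvec \<omega> \<in> A) \<partial>M)
      = (\<integral>\<omega>. indicator S (yghvec \<omega>) * cp_gh A \<omega> \<partial>M)"
    using integral_x_rectangle_ygh[OF A zy] by blast
qed simp

end

section \<open>Exchangeability and the rank p-value\<close>

definition card_ge :: "'k set \<Rightarrow> ('k \<Rightarrow> real) \<Rightarrow> 'k \<Rightarrow> nat" where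
  "card_ge K v j = card {k \<in> K. v j \<le> v k}"

lemma card_ge_eq_sum:
  "finite K \<Longrightarrow> real (card_ge K v j) = (\<Sum>k\<in>K. of_bool (v j \<le> v k))"
  by (simp add: card_ge_def sum_of_bool_eq Int_def)

lemma card_ge_atLeastAtMost_0:
  fixes v :: "nat \<Rightarrow> real"
  shows "real (card_ge {0..Mc} v 0) = 1 + (\<Sum>m\<in>{1..Mc}. of_bool (v 0 \<le> v m))"
  by (simp add: card_ge_eq_sum atLeastAtMost_insertL[symmetric, of 0 Mc])

lemma card_ge_comp_bij:
  assumes "bij_betw \<pi> K K"
  shows "card_ge K (\<lambda>k. v (\<pi> k)) j = card_ge K v (\<pi> j)"
proof -
  have "{k \<in> K. v (\<pi> j) \<le> v k} = \<pi> ` {k \<in> K. v (\<pi> j) \<le> v (\<pi> k)}"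
    using assms by (auto simp: bij_betw_def)
  moreover have "inj_on \<pi> {k \<in> K. v (\<pi> j) \<le> v (\<pi> k)}"
    using assms by (auto simp: bij_betw_def intro: inj_on_subset)
  ultimately show ?thesis by (simp add: card_ge_def card_image)
qed

text \<open>If \<open>J\<close> is the set of indices with at most \<open>c\<close> values at or above their own, the index in \<open>J\<close> with
  the smallest value has all of \<open>J\<close> at or above it.\<close>
lemma card_card_ge_le:
  assumes K: "finite K" and c: "0 \<le> c"
  shows "real (card {j \<in> K. real (card_ge K v j) \<le> c}) \<le> c"
proof (cases "{j \<in> K. real (card_ge K v j) \<le> c} = {}")
  case True
  show ?thesis unfolding True using c by simp
next
  case False
  define J where "J = {j \<in> K. real (card_ge K v j) \<le> c}"
  have J: "finite J" "J \<noteq> {}" using K False unfolding J_def by auto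
  have "Min (v ` J) \<in> v ` J" using J by (intro Min_in) auto
  then obtain j where j: "j \<in> J" "v j = Min (v ` J)" by auto
  have "J \<subseteq> {k \<in> K. v j \<le> v k}"
    using j J by (auto simp: J_def)
  then have "card J \<le> card_ge K v j"
    unfolding card_ge_def using K by (intro card_mono) auto
  also have "real \<dots> \<le> c" using j(1) unfolding J_def by auto
  finally show ?thesis unfolding J_def by simp
qed

context prob_space
begin

text \<open>\<open>product_law\<close> says that, jointly with \<open>W\<close>, the coordinates of \<open>X\<close> are conditionally i.i.d.; such a
  joint law is invariant under permuting the coordinates.\<close>
lemma prob_permute_eq:
  fixes W :: "'a \<Rightarrow> 'w" and X :: "'a \<Rightarrow> 'k \<Rightarrow> 'x" and q :: "'x set \<Rightarrow> 'a \<Rightarrow> real"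
  assumes K: "finite K" and W: "W \<in> M \<rightarrow>\<^sub>M NW" and X: "X \<in> M \<rightarrow>\<^sub>M PiM K (\<lambda>_. VX)"
    and product_law: "\<And>C A. C \<in> sets NW \<Longrightarrow> (\<And>k. k \<in> K \<Longrightarrow> A k \<in> sets VX) \<Longrightarrow>
       (\<integral>\<omega>. indicator C (W \<omega>) * indicator (PiE K A) (X \<omega>) \<partial>M)
     = (\<integral>\<omega>. indicator C (W \<omega>) * (\<Prod>k\<in>K. q (A k) \<omega>) \<partial>M)"
    and \<pi>: "bij_betw \<pi> K K"
    and T: "T \<in> sets (NW \<Otimes>\<^sub>M PiM K (\<lambda>_. VX))"
  shows "prob {\<omega> \<in> space M. (W \<omega>, X \<omega>) \<in> T} = prob {\<omega> \<in> space M. (W \<omega>, \<lambda>k\<in>K. X \<omega> (\<pi> k)) \<in> T}"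
proof -
  define X\<pi> where "X\<pi> \<omega> = (\<lambda>k\<in>K. X \<omega> (\<pi> k))" for \<omega>
  have \<pi>_K: "\<pi> k \<in> K" if "k \<in> K" for k using \<pi> that by (auto simp: bij_betw_def)
  have X\<pi>: "X\<pi> \<in> M \<rightarrow>\<^sub>M PiM K (\<lambda>_. VX)"
    unfolding X\<pi>_def using \<pi>_K measurable_compose[OF X measurable_component_singleton]
    by (intro measurable_restrict) blast
  have X_restrict: "X \<omega> = (\<lambda>k\<in>K. X \<omega> k)" if "\<omega> \<in> space M" for \<omega>
    using measurable_space[OF X that] by (auto simp: space_PiM PiE_def extensional_def)
  define \<sigma> where "\<sigma> = inv_into K \<pi>"
  have \<sigma>: "bij_betw \<sigma> K K" unfolding \<sigma>_def using \<pi> by (rule bij_betw_inv_into)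
  have \<pi>\<sigma>: "\<pi> (\<sigma> k) = k" if "k \<in> K" for k
    unfolding \<sigma>_def using \<pi> that by (simp add: bij_betw_inv_into_right)
  have "(\<integral>\<omega>. indicator T (W \<omega>, X \<omega>) * (1 :: real) \<partial>M) = (\<integral>\<omega>. indicator T (W \<omega>, X\<pi> \<omega>) * (1 :: real) \<partial>M)"
  proof (rule integral_indicator_eq_on_generator[
        OF _ _ Int_stable_generator_pair[OF Int_stable_generator_sets Int_stable_generator_PiM[OF K]] _ _ _ _ _ T])
    fix S assume "S \<in> {a \<times> b |a b. a \<in> sets NW \<and> b \<in> {PiE K A |A. \<forall>i\<in>K. A i \<in> sets VX}}"
    then obtain C A where S: "S = C \<times> PiE K A" and C: "C \<in> sets NW" and A: "\<And>k. k \<in> K \<Longrightarrow> A k \<in> sets VX"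
      by auto
    have A\<sigma>: "A (\<sigma> k) \<in> sets VX" if "k \<in> K" for k
      using A \<sigma> that by (auto simp: bij_betw_def)
    have X\<pi>_rect: "indicator (PiE K A) (X\<pi> \<omega>) = (indicator (PiE K (\<lambda>k. A (\<sigma> k))) (X \<omega>) :: real)"
      if "\<omega> \<in> space M" for \<omega>
    proof -
      have "indicator (PiE K A) (X\<pi> \<omega>) = (\<Prod>k\<in>K. indicator (A k) (X \<omega> (\<pi> k)) :: real)"
        unfolding X\<pi>_def by (rule indicator_PiE_restrict[OF K])
      also have "\<dots> = (\<Prod>k\<in>K. indicator (A (\<sigma> k)) (X \<omega> (\<pi> (\<sigma> k))))"
        by (rule prod.reindex_bij_betw[OF \<sigma>, symmetric])
      also have "\<dots> = indicator (PiE K (\<lambda>k. A (\<sigma> k))) (X \<omega>)"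
        using indicator_PiE_restrict[OF K, of "\<lambda>k. A (\<sigma> k)" "X \<omega>"] X_restrict[OF that]
        by (simp add: \<pi>\<sigma>)
      finally show ?thesis .
    qed
    have "(\<integral>\<omega>. indicator S (W \<omega>, X \<omega>) * (1 :: real) \<partial>M) = (\<integral>\<omega>. indicator C (W \<omega>) * (\<Prod>k\<in>K. q (A k) \<omega>) \<partial>M)"
      using product_law[OF C A] by (simp add: S indicator_times)
    also have "\<dots> = (\<integral>\<omega>. indicator C (W \<omega>) * (\<Prod>k\<in>K. q (A (\<sigma> k)) \<omega>) \<partial>M)"
      by (simp add: prod.reindex_bij_betw[OF \<sigma>, of "\<lambda>k. q (A k) _"])
    also have "\<dots> = (\<integral>\<omega>. indicator C (W \<omega>) * indicator (PiE K (\<lambda>k. A (\<sigma> k))) (X \<omega>) \<partial>M)"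
      using product_law[OF C A\<sigma>] by simp
    also have "\<dots> = (\<integral>\<omega>. indicator S (W \<omega>, X\<pi> \<omega>) * (1 :: real) \<partial>M)"
      by (intro Bochner_Integration.integral_cong) (simp_all add: S indicator_times X\<pi>_rect)
    finally show "(\<integral>\<omega>. indicator S (W \<omega>, X \<omega>) * 1 \<partial>M) = (\<integral>\<omega>. indicator S (W \<omega>, X\<pi> \<omega>) * (1 :: real) \<partial>M)" .
  qed (use W X X\<pi> in simp_all)
  moreover have "(\<integral>\<omega>. indicator T (Y \<omega>) * (1 :: real) \<partial>M) = prob {\<omega> \<in> space M. Y \<omega> \<in> T}"
    if "Y \<in> M \<rightarrow>\<^sub>M NW \<Otimes>\<^sub>M PiM K (\<lambda>_. VX)" for Y
  proof -
    have "(\<integral>\<omega>. indicator T (Y \<omega>) * (1 :: real) \<partial>M) = (\<integral>\<omega>. indicator {\<omega> \<in> space M. Y \<omega> \<in> T} \<omega> \<partial>M)"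
      by (intro Bochner_Integration.integral_cong) (auto simp: indicator_def)
    then show ?thesis by (simp add: Int_absorb2 subset_iff)
  qed
  ultimately show ?thesis unfolding X\<pi>_def using W X X\<pi>[unfolded X\<pi>_def] by simp
qed

lemma prob_card_ge_swap:
  fixes W :: "'a \<Rightarrow> 'w" and X :: "'a \<Rightarrow> 'k \<Rightarrow> 'x" and q :: "'x set \<Rightarrow> 'a \<Rightarrow> real"
    and Ts :: "'w \<Rightarrow> 'x \<Rightarrow> real"
  assumes K: "finite K" and W: "W \<in> M \<rightarrow>\<^sub>M NW" and X: "X \<in> M \<rightarrow>\<^sub>M PiM K (\<lambda>_. VX)"
    and product_law: "\<And>C A. C \<in> sets NW \<Longrightarrow> (\<And>k. k \<in> K \<Longrightarrow> A k \<in> sets VX) \<Longrightarrow>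
       (\<integral>\<omega>. indicator C (W \<omega>) * indicator (PiE K A) (X \<omega>) \<partial>M)
     = (\<integral>\<omega>. indicator C (W \<omega>) * (\<Prod>k\<in>K. q (A k) \<omega>) \<partial>M)"
    and Ts: "(\<lambda>p. Ts (fst p) (snd p)) \<in> borel_measurable (NW \<Otimes>\<^sub>M VX)"
    and i: "i \<in> K" and j: "j \<in> K"
  shows "prob {\<omega> \<in> space M. real (card_ge K (\<lambda>k. Ts (W \<omega>) (X \<omega> k)) j) \<le> c}
       = prob {\<omega> \<in> space M. real (card_ge K (\<lambda>k. Ts (W \<omega>) (X \<omega> k)) i) \<le> c}"
proof -
  let ?N = "NW \<Otimes>\<^sub>M PiM K (\<lambda>_. VX)"
  define T where "T = {p \<in> space ?N. real (card_ge K (\<lambda>k. Ts (fst p) (snd p k)) i) \<le> c}"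
  have Ts_k: "(\<lambda>p. Ts (fst p) (snd p k)) \<in> borel_measurable ?N" if "k \<in> K" for k
  proof -
    have "(\<lambda>p. (fst p, snd p k)) \<in> ?N \<rightarrow>\<^sub>M NW \<Otimes>\<^sub>M VX"
      using measurable_component_singleton[OF that, of "\<lambda>_. VX"] by measurable
    from measurable_compose[OF this Ts] show ?thesis by simp
  qed
  have "(\<lambda>p. real (card_ge K (\<lambda>k. Ts (fst p) (snd p k)) i)) \<in> borel_measurable ?N"
    unfolding card_ge_eq_sum[OF K] by (rule borel_measurable_sum) (use Ts_k[OF i] Ts_k in measurable)
  then have T: "T \<in> sets ?N" unfolding T_def by measurable
  have card_ge_restrict: "card_ge K (\<lambda>k. v (restrict f K k)) i = card_ge K (\<lambda>k. v (f k)) i" for v f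
    using i by (simp add: card_ge_def cong: conj_cong)
  define \<pi> where "\<pi> = Transposition.transpose i j"
  have \<pi>: "bij_betw \<pi> K K" using i j by (simp add: \<pi>_def)
  have X\<pi>: "(\<lambda>\<omega>. \<lambda>k\<in>K. X \<omega> (\<pi> k)) \<in> M \<rightarrow>\<^sub>M PiM K (\<lambda>_. VX)"
    using \<pi> measurable_compose[OF X measurable_component_singleton]
    by (intro measurable_restrict) (auto simp: bij_betw_def)
  have event_X: "{\<omega> \<in> space M. (W \<omega>, X \<omega>) \<in> T}
      = {\<omega> \<in> space M. real (card_ge K (\<lambda>k. Ts (W \<omega>) (X \<omega> k)) i) \<le> c}"
    using measurable_space[OF measurable_Pair[OF W X]] unfolding T_def by auto
  have event_X\<pi>: "{\<omega> \<in> space M. (W \<omega>, \<lambda>k\<in>K. X \<omega> (\<pi> k)) \<in> T}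
      = {\<omega> \<in> space M. real (card_ge K (\<lambda>k. Ts (W \<omega>) (X \<omega> k)) j) \<le> c}"
  proof -
    have "card_ge K (\<lambda>k. Ts (W \<omega>) (restrict (\<lambda>k. X \<omega> (\<pi> k)) K k)) i
        = card_ge K (\<lambda>k. Ts (W \<omega>) (X \<omega> k)) j" for \<omega>
      using card_ge_restrict[of "Ts (W \<omega>)"] card_ge_comp_bij[OF \<pi>, of "\<lambda>k. Ts (W \<omega>) (X \<omega> k)" i]
      by (simp add: \<pi>_def)
    then show ?thesis
      using measurable_space[OF measurable_Pair[OF W X\<pi>]] unfolding T_def by auto
  qed
  from prob_permute_eq[OF K W X product_law \<pi> T] show ?thesis
    unfolding event_X event_X\<pi> by (rule sym)
qed

text \<open>With \<open>c = \<alpha> \<cdot> card K\<close>, the \<open>card K\<close> events "at most \<open>c\<close> values are at or above that of index \<open>j\<close>" are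
  equally likely, and at most \<open>c\<close> of them occur at once.\<close>
lemma prob_card_ge_le:
  fixes V :: "'k \<Rightarrow> 'a \<Rightarrow> real" and \<alpha> :: real
  assumes K: "finite K" and i: "i \<in> K" and V: "\<And>k. k \<in> K \<Longrightarrow> V k \<in> borel_measurable M"
    and exchangeable: "\<And>j. j \<in> K \<Longrightarrow>
        prob {\<omega> \<in> space M. real (card_ge K (\<lambda>k. V k \<omega>) j) \<le> \<alpha> * card K}
      = prob {\<omega> \<in> space M. real (card_ge K (\<lambda>k. V k \<omega>) i) \<le> \<alpha> * card K}"
    and \<alpha>: "0 \<le> \<alpha>"
  shows "prob {\<omega> \<in> space M. real (card_ge K (\<lambda>k. V k \<omega>) i) \<le> \<alpha> * card K} \<le> \<alpha>"
proof -
  define E where "E j = {\<omega> \<in> space M. real (card_ge K (\<lambda>k. V k \<omega>) j) \<le> \<alpha> * card K}" for j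
  have E: "E j \<in> sets M" if "j \<in> K" for j
    unfolding E_def card_ge_eq_sum[OF K] using V that by measurable
  have E_int: "integrable M (indicator (E j) :: 'a \<Rightarrow> real)" if "j \<in> K" for j
    using E[OF that] by (simp add: emeasure_finite less_top[symmetric])
  have count: "(\<Sum>j\<in>K. indicator (E j) \<omega> :: real) \<le> \<alpha> * card K" if "\<omega> \<in> space M" for \<omega>
  proof -
    have "(\<Sum>j\<in>K. indicator (E j) \<omega> :: real) = real (card {j \<in> K. real (card_ge K (\<lambda>k. V k \<omega>) j) \<le> \<alpha> * card K})"
      using that K by (simp add: E_def indicator_def sum_of_bool_eq Int_def of_bool_def[symmetric])
    also have "\<dots> \<le> \<alpha> * card K" using K \<alpha> by (intro card_card_ge_le) auto
    finally show ?thesis .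
  qed
  have "card K * prob (E i) = (\<Sum>j\<in>K. prob (E j))"
    using exchangeable by (simp add: E_def)
  also have "\<dots> = (\<integral>\<omega>. (\<Sum>j\<in>K. indicator (E j) \<omega>) \<partial>M)"
    using E E_int by (simp add: Bochner_Integration.integral_sum)
  also have "\<dots> \<le> (\<integral>\<omega>. \<alpha> * card K \<partial>M)"
    using E_int count by (intro integral_mono) auto
  also have "\<dots> = card K * \<alpha>" by (simp add: prob_space)
  finally have "card K * prob (E i) \<le> card K * \<alpha>" .
  moreover have "0 < card K" using K i by (auto simp: card_gt_0_iff)
  ultimately show ?thesis unfolding E_def by simp
qed

end

section \<open>Validity of the conditional randomization test\<close>

locale crt_resampling = prob_space M for M :: "'a measure" +
  fixes G :: "'a measure"
    and W :: "'a \<Rightarrow> 'w" and NW :: "'w measure"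
    and D :: "'a \<Rightarrow> 'd" and ND :: "'d measure"
    and x :: "'a \<Rightarrow> 'x" and VX :: "'x measure"
    and Mc :: nat and xt :: "nat \<Rightarrow> 'a \<Rightarrow> 'x" and q :: "'x set \<Rightarrow> 'a \<Rightarrow> real"
  assumes G: "sigma_finite_subalgebra M G" and W_G: "W \<in> G \<rightarrow>\<^sub>M NW"
    and D: "D \<in> M \<rightarrow>\<^sub>M ND"
    and W_D: "W \<in> vimage_algebra (space M) D ND \<rightarrow>\<^sub>M NW"
    and x_D: "x \<in> vimage_algebra (space M) D ND \<rightarrow>\<^sub>M VX"
    and xt: "\<And>m. m \<in> {1..Mc} \<Longrightarrow> xt m \<in> M \<rightarrow>\<^sub>M VX"
    and sampling: "\<And>A. (\<And>m. m \<in> {1..Mc} \<Longrightarrow> A m \<in> sets VX) \<Longrightarrow>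
        AE \<omega> in M. cond_prob M D ND (\<lambda>\<omega>'. \<forall>m\<in>{1..Mc}. xt m \<omega>' \<in> A m) \<omega> = (\<Prod>m\<in>{1..Mc}. q (A m) \<omega>)"
    and q_measurable: "\<And>A. A \<in> sets VX \<Longrightarrow> q A \<in> borel_measurable M"
    and q_cond: "\<And>A. A \<in> sets VX \<Longrightarrow> AE \<omega> in M. q A \<omega> = real_cond_exp M G (\<lambda>\<omega>. of_bool (x \<omega> \<in> A)) \<omega>"
begin

definition "sample \<omega> = (\<lambda>k\<in>{0..Mc}. if k = 0 then x \<omega> else xt k \<omega>)"

lemma measurable_of_vimage_D: "f \<in> vimage_algebra (space M) D ND \<rightarrow>\<^sub>M N \<Longrightarrow> f \<in> M \<rightarrow>\<^sub>M N"
  using measurable_from_subalg[OF subalgebra_vimage_algebra[OF D]] .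

lemma measurable_sample: "sample \<in> M \<rightarrow>\<^sub>M PiM {0..Mc} (\<lambda>_. VX)"
  unfolding sample_def
proof (rule measurable_restrict)
  fix k assume "k \<in> {0..Mc}"
  then show "(\<lambda>\<omega>. if k = 0 then x \<omega> else xt k \<omega>) \<in> M \<rightarrow>\<^sub>M VX"
    using measurable_of_vimage_D[OF x_D] xt[of k] by (cases "k = 0") auto
qed

lemma integral_resamples:
  assumes f: "f \<in> borel_measurable (vimage_algebra (space M) D ND)" "AE \<omega> in M. \<bar>f \<omega>\<bar> \<le> 1"
    and A: "\<And>m. m \<in> {1..Mc} \<Longrightarrow> A m \<in> sets VX"
  shows "(\<integral>\<omega>. f \<omega> * of_bool (\<forall>m\<in>{1..Mc}. xt m \<omega> \<in> A m) \<partial>M)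
       = (\<integral>\<omega>. f \<omega> * (\<Prod>m\<in>{1..Mc}. q (A m) \<omega>) \<partial>M)"
proof -
  define FD where "FD = vimage_algebra (space M) D ND"
  have FD: "sigma_finite_subalgebra M FD"
    unfolding FD_def by (rule sigma_finite_subalgebra_vimage_algebra[OF D])
  define eS where "eS \<omega> = (of_bool (\<forall>m\<in>{1..Mc}. xt m \<omega> \<in> A m) :: real)" for \<omega>
  have "eS = (\<lambda>\<omega>. \<Prod>m\<in>{1..Mc}. indicator (A m) (xt m \<omega>))"
  proof
    fix \<omega>
    show "eS \<omega> = (\<Prod>m\<in>{1..Mc}. indicator (A m) (xt m \<omega>))"
      using indicator_PiE_restrict[of "{1..Mc}" A "\<lambda>m. xt m \<omega>"]
      by (simp add: eS_def indicator_def PiE_iff)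
  qed
  moreover have "(\<lambda>\<omega>. \<Prod>m\<in>{1..Mc}. indicator (A m) (xt m \<omega>) :: real) \<in> borel_measurable M"
    by (rule borel_measurable_prod) (use xt A in measurable)
  ultimately have "eS \<in> borel_measurable M" by simp
  then have eS: "eS \<in> borel_measurable M" "\<And>\<omega>. \<omega> \<in> space M \<Longrightarrow> 0 \<le> eS \<omega> \<and> eS \<omega> \<le> 1"
    by (simp_all add: eS_def)
  have "(\<integral>\<omega>. f \<omega> * eS \<omega> \<partial>M) = (\<integral>\<omega>. f \<omega> * real_cond_exp M FD eS \<omega> \<partial>M)"
    using f by (intro integral_mult_real_cond_exp[OF FD _ _ eS, symmetric]) (simp_all add: FD_def)
  also have "\<dots> = (\<integral>\<omega>. f \<omega> * (\<Prod>m\<in>{1..Mc}. q (A m) \<omega>) \<partial>M)"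
  proof (rule integral_cong_AE)
    show "AE \<omega> in M. f \<omega> * real_cond_exp M FD eS \<omega> = f \<omega> * (\<Prod>m\<in>{1..Mc}. q (A m) \<omega>)"
      using sampling[of A] A unfolding cond_prob_def gen_sigma_def FD_def eS_def
      by (auto elim!: eventually_mono)
  qed (use measurable_of_vimage_D[OF f(1)] q_measurable A in simp_all)
  finally show ?thesis unfolding eS_def .
qed

lemma integral_x_eq_q:
  assumes f: "f \<in> borel_measurable G" "AE \<omega> in M. \<bar>f \<omega>\<bar> \<le> 1" and B: "B \<in> sets VX"
  shows "(\<integral>\<omega>. f \<omega> * of_bool (x \<omega> \<in> B) \<partial>M) = (\<integral>\<omega>. f \<omega> * q B \<omega> \<partial>M)"
proof -
  have "(\<lambda>\<omega>. of_bool (x \<omega> \<in> B) :: real) \<in> borel_measurable M"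
    using measurable_of_vimage_D[OF x_D] B by measurable
  from integral_mult_real_cond_exp[OF G f this]
  have "(\<integral>\<omega>. f \<omega> * of_bool (x \<omega> \<in> B) \<partial>M)
      = (\<integral>\<omega>. f \<omega> * real_cond_exp M G (\<lambda>\<omega>. of_bool (x \<omega> \<in> B)) \<omega> \<partial>M)" by simp
  also have "\<dots> = (\<integral>\<omega>. f \<omega> * q B \<omega> \<partial>M)"
    using q_cond[OF B] measurable_from_subalg[OF sigma_finite_subalgebra.subalg[OF G] f(1)]
      q_measurable[OF B] by (intro integral_cong_AE) (auto elim: eventually_mono)
  finally show ?thesis .
qed

text \<open>
  Conditioning on \<open>D\<close> turns the indicator of the resamples into \<open>\<Prod>\<^sub>m q(A\<^sub>m)\<close>; the remaining
  factor is then, up to a null set, \<open>G\<close>-measurable, so \<open>1\<^sub>A\<^sub>\<^sub>0(x)\<close> may be replaced by \<open>q(A\<^sub>0)\<close> as well.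
\<close>
lemma integral_sample_rectangle:
  assumes C: "C \<in> sets NW" and A: "\<And>k. k \<in> {0..Mc} \<Longrightarrow> A k \<in> sets VX"
  shows "(\<integral>\<omega>. indicator C (W \<omega>) * indicator (PiE {0..Mc} A) (sample \<omega>) \<partial>M)
       = (\<integral>\<omega>. indicator C (W \<omega>) * (\<Prod>k\<in>{0..Mc}. q (A k) \<omega>) \<partial>M)"
proof -
  have x[measurable]: "x \<in> M \<rightarrow>\<^sub>M VX" and W[measurable]: "W \<in> M \<rightarrow>\<^sub>M NW"
    using measurable_of_vimage_D[OF x_D] measurable_of_vimage_D[OF W_D] .
  note [measurable] = C A
  define cq where "cq B = real_cond_exp M G (\<lambda>\<omega>. of_bool (x \<omega> \<in> B))" for B
  have cq_G: "cq B \<in> borel_measurable G" for B unfolding cq_def by simp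
  have q_cq: "AE \<omega> in M. \<forall>k\<in>{0..Mc}. q (A k) \<omega> = cq (A k) \<omega>"
    using q_cond A by (intro AE_finite_allI) (auto simp: cq_def)
  have "AE \<omega> in M. \<forall>m\<in>{1..Mc}. \<bar>cq (A m) \<omega>\<bar> \<le> 1"
    unfolding cq_def using A by (intro AE_finite_allI real_cond_exp_unit_interval(2)[OF G]) simp_all
  then have cq_bound: "AE \<omega> in M. \<bar>indicator C (W \<omega>) * (\<Prod>m\<in>{1..Mc}. cq (A m) \<omega>)\<bar> \<le> 1"
    by eventually_elim (auto simp: abs_mult abs_prod intro!: mult_le_one prod_le_1 prod_nonneg)
  have sample_rect: "indicator (PiE {0..Mc} A) (sample \<omega>)
      = (indicator (A 0) (x \<omega>) * of_bool (\<forall>m\<in>{1..Mc}. xt m \<omega> \<in> A m) :: real)" for \<omega>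
    unfolding sample_def indicator_PiE_restrict[OF finite_atLeastAtMost]
    by (simp add: atLeastAtMost_insertL[symmetric, of 0 Mc] indicator_PiE_restrict[of "{1..Mc}", symmetric]
        indicator_def PiE_iff)
  have "(\<integral>\<omega>. (indicator C (W \<omega>) * indicator (PiE {0..Mc} A) (sample \<omega>) :: real) \<partial>M)
      = (\<integral>\<omega>. (indicator C (W \<omega>) * indicator (A 0) (x \<omega>)) * of_bool (\<forall>m\<in>{1..Mc}. xt m \<omega> \<in> A m) \<partial>M)"
    by (simp add: sample_rect ac_simps)
  also have "\<dots> = (\<integral>\<omega>. (indicator C (W \<omega>) * indicator (A 0) (x \<omega>)) * (\<Prod>m\<in>{1..Mc}. q (A m) \<omega>) \<partial>M)"
    using W_D x_D by (intro integral_resamples) (simp_all add: indicator_def)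
  also have "\<dots> = (\<integral>\<omega>. (indicator C (W \<omega>) * (\<Prod>m\<in>{1..Mc}. cq (A m) \<omega>)) * of_bool (x \<omega> \<in> A 0) \<partial>M)"
    using q_cq q_measurable A measurable_from_subalg[OF sigma_finite_subalgebra.subalg[OF G] cq_G]
    by (intro integral_cong_AE) (auto simp: indicator_def elim!: eventually_mono)
  also have "\<dots> = (\<integral>\<omega>. (indicator C (W \<omega>) * (\<Prod>m\<in>{1..Mc}. cq (A m) \<omega>)) * q (A 0) \<omega> \<partial>M)"
    using W_G cq_G cq_bound A by (intro integral_x_eq_q) simp_all
  also have "\<dots> = (\<integral>\<omega>. indicator C (W \<omega>) * (\<Prod>k\<in>{0..Mc}. q (A k) \<omega>) \<partial>M)"
  proof (rule integral_cong_AE)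
    show "AE \<omega> in M. indicator C (W \<omega>) * (\<Prod>m\<in>{1..Mc}. cq (A m) \<omega>) * q (A 0) \<omega>
        = indicator C (W \<omega>) * (\<Prod>k\<in>{0..Mc}. q (A k) \<omega>)"
      using q_cq by eventually_elim (simp add: atLeastAtMost_insertL[symmetric, of 0 Mc] ac_simps)
  qed (use q_measurable A measurable_from_subalg[OF sigma_finite_subalgebra.subalg[OF G] cq_G] in simp_all)
  finally show ?thesis .
qed

theorem prob_p_value_le:
  fixes Ts :: "'w \<Rightarrow> 'x \<Rightarrow> real"
  assumes Ts: "(\<lambda>p. Ts (fst p) (snd p)) \<in> borel_measurable (NW \<Otimes>\<^sub>M VX)" and \<alpha>: "0 \<le> \<alpha>"
  shows "prob {\<omega> \<in> space M.
    (1 + (\<Sum>m\<in>{1..Mc}. of_bool (Ts (W \<omega>) (x \<omega>) \<le> Ts (W \<omega>) (xt m \<omega>)))) / (real Mc + 1) \<le> \<alpha>} \<le> \<alpha>"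
proof -
  have W: "W \<in> M \<rightarrow>\<^sub>M NW" using measurable_of_vimage_D[OF W_D] .
  note rectangle = integral_sample_rectangle
  have "prob {\<omega> \<in> space M. real (card_ge {0..Mc} (\<lambda>k. Ts (W \<omega>) (sample \<omega> k)) 0) \<le> \<alpha> * card {0..Mc}} \<le> \<alpha>"
  proof (rule prob_card_ge_le)
    fix k assume "k \<in> {0..Mc}"
    have "(\<lambda>\<omega>. (W \<omega>, sample \<omega> k)) \<in> M \<rightarrow>\<^sub>M NW \<Otimes>\<^sub>M VX"
      using W measurable_compose[OF measurable_sample measurable_component_singleton[OF \<open>k \<in> {0..Mc}\<close>]]
      by measurable
    from measurable_compose[OF this Ts] show "(\<lambda>\<omega>. Ts (W \<omega>) (sample \<omega> k)) \<in> borel_measurable M" by simp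
  next
    fix j assume "j \<in> {0..Mc}"
    then show "prob {\<omega> \<in> space M. real (card_ge {0..Mc} (\<lambda>k. Ts (W \<omega>) (sample \<omega> k)) j) \<le> \<alpha> * card {0..Mc}}
      = prob {\<omega> \<in> space M. real (card_ge {0..Mc} (\<lambda>k. Ts (W \<omega>) (sample \<omega> k)) 0) \<le> \<alpha> * card {0..Mc}}"
      by (intro prob_card_ge_swap[OF _ W measurable_sample rectangle Ts]) auto
  qed (use \<alpha> in auto)
  moreover have "real (card_ge {0..Mc} (\<lambda>k. Ts (W \<omega>) (sample \<omega> k)) 0)
      = 1 + (\<Sum>m\<in>{1..Mc}. of_bool (Ts (W \<omega>) (x \<omega>) \<le> Ts (W \<omega>) (xt m \<omega>)))" for \<omega>
    unfolding card_ge_atLeastAtMost_0 by (simp add: sample_def)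
  ultimately show ?thesis
    by (simp add: pos_divide_le_eq add.commute[of "real Mc" 1] mult.commute)
qed

end

context null_sample_gh
begin

text \<open>In case (i) the conditioning \<sigma>-algebra is that of \<open>(y, Z)\<close>, in case (ii) that of \<open>(y, g(Z), h(Z))\<close>.\<close>
lemma conditioning_algebra:
  fixes q :: "(nat \<Rightarrow> real) set \<Rightarrow> 'a \<Rightarrow> real"
  assumes q_law: "(\<forall>A\<in>sets VX. AE \<omega> in M. q A \<omega> = cp_z A \<omega>)
      \<or> ((\<forall>A\<in>sets VX. AE \<omega> in M. q A \<omega> = cp_gh A \<omega>) \<and> cond_indep M zvec VZ yvec VX gvec VG)"
  obtains G where "sigma_finite_subalgebra M G" "yghvec \<in> G \<rightarrow>\<^sub>M VX \<Otimes>\<^sub>M VG \<Otimes>\<^sub>M VH"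
    and "\<And>A. A \<in> sets VX \<Longrightarrow> AE \<omega> in M. q A \<omega> = real_cond_exp M G (\<lambda>\<omega>. of_bool (xvec \<omega> \<in> A)) \<omega>"
proof (cases "\<forall>A\<in>sets VX. AE \<omega> in M. q A \<omega> = cp_z A \<omega>")
  case True
  let ?G = "vimage_algebra (space M) yzvec (VX \<Otimes>\<^sub>M VZ)"
  have "(\<lambda>\<omega>. (fst (yzvec \<omega>), vmap n g (snd (yzvec \<omega>)), vmap n h (snd (yzvec \<omega>))))
      \<in> ?G \<rightarrow>\<^sub>M VX \<Otimes>\<^sub>M VG \<Otimes>\<^sub>M VH"
    by (rule measurable_vimage_algebra_comp[OF measurable_yzvec]) measurable
  then have "yghvec \<in> ?G \<rightarrow>\<^sub>M VX \<Otimes>\<^sub>M VG \<Otimes>\<^sub>M VH"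
    by (simp add: yghvec_def[abs_def] yzvec_def gvec_def hvec_def)
  moreover have "AE \<omega> in M. q A \<omega> = real_cond_exp M ?G (\<lambda>\<omega>. of_bool (xvec \<omega> \<in> A)) \<omega>" if "A \<in> sets VX" for A
    using True that cond_prob_x_given_yz[OF that] unfolding cond_prob_def gen_sigma_def
    by (auto elim!: eventually_elim2)
  ultimately show ?thesis
    using that sigma_finite_subalgebra_vimage_algebra[OF measurable_yzvec] by blast
next
  case False
  then have q: "\<And>A. A \<in> sets VX \<Longrightarrow> AE \<omega> in M. q A \<omega> = cp_gh A \<omega>"
    and zy: "cond_indep M zvec VZ yvec VX gvec VG"
    using q_law by auto
  let ?G = "vimage_algebra (space M) yghvec (VX \<Otimes>\<^sub>M VG \<Otimes>\<^sub>M VH)"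
  have "AE \<omega> in M. q A \<omega> = real_cond_exp M ?G (\<lambda>\<omega>. of_bool (xvec \<omega> \<in> A)) \<omega>" if "A \<in> sets VX" for A
    using q[OF that] cond_prob_x_given_ygh[OF that zy] unfolding cond_prob_def gen_sigma_def
    by eventually_elim simp
  moreover have "yghvec \<in> ?G \<rightarrow>\<^sub>M VX \<Otimes>\<^sub>M VG \<Otimes>\<^sub>M VH"
    using measurable_vimage_algebra_comp[OF measurable_yghvec measurable_ident] by simp
  ultimately show ?thesis
    using that sigma_finite_subalgebra_vimage_algebra[OF measurable_yghvec] by blast
qed

theorem maxway_p_value_valid:
  fixes Q :: "(nat \<Rightarrow> 'z) \<Rightarrow> (nat \<Rightarrow> real) measure" and xt :: "nat \<Rightarrow> 'a \<Rightarrow> nat \<Rightarrow> real"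
    and T :: "(nat \<Rightarrow> real) \<Rightarrow> (nat \<Rightarrow> real) \<Rightarrow> (nat \<Rightarrow> 'g) \<Rightarrow> (nat \<Rightarrow> 'h) \<Rightarrow> real"
  assumes T: "(\<lambda>(a, b, c, d). T a b c d) \<in> borel_measurable (VX \<Otimes>\<^sub>M VX \<Otimes>\<^sub>M VG \<Otimes>\<^sub>M VH)"
    and Q: "Q \<in> VZ \<rightarrow>\<^sub>M prob_algebra VX"
    and xt: "\<And>m. m \<in> {1..Mc} \<Longrightarrow> xt m \<in> M \<rightarrow>\<^sub>M VX"
    and sampling: "\<And>A. (\<And>m. m \<in> {1..Mc} \<Longrightarrow> A m \<in> sets VX) \<Longrightarrow>
        AE \<omega> in M. cond_prob M (\<lambda>\<omega>. (yvec \<omega>, xvec \<omega>, zvec \<omega>)) (VX \<Otimes>\<^sub>M VX \<Otimes>\<^sub>M VZ)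
            (\<lambda>\<omega>'. \<forall>m\<in>{1..Mc}. xt m \<omega>' \<in> A m) \<omega> = (\<Prod>m\<in>{1..Mc}. measure (Q (zvec \<omega>)) (A m))"
    and Q_law: "(\<forall>A\<in>sets VX. AE \<omega> in M. measure (Q (zvec \<omega>)) A = cp_z A \<omega>)
      \<or> ((\<forall>A\<in>sets VX. AE \<omega> in M. measure (Q (zvec \<omega>)) A = cp_gh A \<omega>)
        \<and> cond_indep M zvec VZ yvec VX gvec VG)"
    and \<alpha>: "0 \<le> \<alpha>"
  shows "prob {\<omega> \<in> space M. p_maxway Mc T (yvec \<omega>) (xvec \<omega>) (\<lambda>m. xt m \<omega>) (gvec \<omega>) (hvec \<omega>) \<le> \<alpha>} \<le> \<alpha>"
proof -
  let ?NW = "VX \<Otimes>\<^sub>M VG \<Otimes>\<^sub>M VH" and ?D = "\<lambda>\<omega>. (yvec \<omega>, xvec \<omega>, zvec \<omega>)"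
  define q where "q A \<omega> = measure (Q (zvec \<omega>)) A" for A \<omega>
  obtain G where G: "sigma_finite_subalgebra M G" "yghvec \<in> G \<rightarrow>\<^sub>M ?NW"
    and q_G: "\<And>A. A \<in> sets VX \<Longrightarrow> AE \<omega> in M. q A \<omega> = real_cond_exp M G (\<lambda>\<omega>. of_bool (xvec \<omega> \<in> A)) \<omega>"
    using conditioning_algebra[of q] Q_law unfolding q_def by blast
  have "crt_resampling_axioms M G yghvec ?NW ?D (VX \<Otimes>\<^sub>M VX \<Otimes>\<^sub>M VZ) xvec VX Mc xt q"
  proof (rule crt_resampling_axioms.intro)
    have "(\<lambda>\<omega>. (\<lambda>(y, x, z). (y, vmap n g z, vmap n h z)) (?D \<omega>))
        \<in> vimage_algebra (space M) ?D (VX \<Otimes>\<^sub>M VX \<Otimes>\<^sub>M VZ) \<rightarrow>\<^sub>M ?NW"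
      by (rule measurable_vimage_algebra_comp) measurable
    then show "yghvec \<in> vimage_algebra (space M) ?D (VX \<Otimes>\<^sub>M VX \<Otimes>\<^sub>M VZ) \<rightarrow>\<^sub>M ?NW"
      by (simp add: yghvec_def[abs_def] gvec_def hvec_def)
    have "(\<lambda>\<omega>. fst (snd (?D \<omega>))) \<in> vimage_algebra (space M) ?D (VX \<Otimes>\<^sub>M VX \<Otimes>\<^sub>M VZ) \<rightarrow>\<^sub>M VX"
      by (rule measurable_vimage_algebra_comp) measurable
    then show "xvec \<in> vimage_algebra (space M) ?D (VX \<Otimes>\<^sub>M VX \<Otimes>\<^sub>M VZ) \<rightarrow>\<^sub>M VX"
      by simp
    show "q A \<in> borel_measurable M" if "A \<in> sets VX" for A
      unfolding q_def using measurable_compose[OF measurable_compose[OF measurable_zvec Q]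
          measurable_measure_prob_algebra[OF that]] .
    show "?D \<in> M \<rightarrow>\<^sub>M VX \<Otimes>\<^sub>M VX \<Otimes>\<^sub>M VZ" by measurable
  qed (fact G xt sampling[folded q_def] q_G)+
  then interpret crt_resampling M G yghvec ?NW ?D "VX \<Otimes>\<^sub>M VX \<Otimes>\<^sub>M VZ" xvec VX Mc xt q
    by (intro crt_resampling.intro prob_space_axioms)
  define Ts where "Ts w u = T (fst w) u (fst (snd w)) (snd (snd w))" for w u
  have "(\<lambda>p. (\<lambda>(a, b, c, d). T a b c d) (fst (fst p), snd p, fst (snd (fst p)), snd (snd (fst p))))
      \<in> borel_measurable (?NW \<Otimes>\<^sub>M VX)"
    by (rule measurable_compose[OF _ T]) measurable
  then have "(\<lambda>p. Ts (fst p) (snd p)) \<in> borel_measurable (?NW \<Otimes>\<^sub>M VX)"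
    by (simp add: Ts_def split_beta')
  from prob_p_value_le[OF this \<alpha>] show ?thesis
    by (simp add: p_maxway_def Ts_def yghvec_def)
qed

end

theorem theorem1:
  fixes P :: "'a measure"
    and n Mc :: nat
    and Yv Xv :: "nat \<Rightarrow> 'a \<Rightarrow> real"
    and Zv :: "nat \<Rightarrow> 'a \<Rightarrow> real ^ 'p"
    and g :: "real ^ 'p \<Rightarrow> 'g :: euclidean_space"
    and h :: "real ^ 'p \<Rightarrow> 'h :: euclidean_space"
    and T :: "(nat \<Rightarrow> real) \<Rightarrow> (nat \<Rightarrow> real) \<Rightarrow> (nat \<Rightarrow> 'g) \<Rightarrow> (nat \<Rightarrow> 'h) \<Rightarrow> real"
    and Q :: "(nat \<Rightarrow> real ^ 'p) \<Rightarrow> (nat \<Rightarrow> real) measure"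
    and xt :: "nat \<Rightarrow> 'a \<Rightarrow> nat \<Rightarrow> real"
  defines "y \<equiv> rvec n Yv"
    and "x \<equiv> rvec n Xv"
    and "Zm \<equiv> rvec n Zv"
    and "gZ \<equiv> (\<lambda>\<omega>. vmap n g (rvec n Zv \<omega>))"
    and "hZ \<equiv> (\<lambda>\<omega>. vmap n h (rvec n Zv \<omega>))"
    and "D \<equiv> (\<lambda>\<omega>. (rvec n Yv \<omega>, rvec n Xv \<omega>, rvec n Zv \<omega>))"
  assumes P: "prob_space P"
    and meas_Y: "\<And>i. i < n \<Longrightarrow> Yv i \<in> borel_measurable P"
    and meas_X: "\<And>i. i < n \<Longrightarrow> Xv i \<in> borel_measurable P"
    and meas_Z: "\<And>i. i < n \<Longrightarrow> Zv i \<in> borel_measurable P"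
    \<comment> \<open>(Y_i, X_i, Z_i) are i.i.d.\<close>
    and indep: "prob_space.indep_vars P (\<lambda>_. borel \<Otimes>\<^sub>M borel \<Otimes>\<^sub>M borel)
                  (\<lambda>i \<omega>. (Yv i \<omega>, Xv i \<omega>, Zv i \<omega>)) {..<n}"
    and ident: "\<And>i. i < n \<Longrightarrow>
        distr P (borel \<Otimes>\<^sub>M borel \<Otimes>\<^sub>M borel) (\<lambda>\<omega>. (Yv i \<omega>, Xv i \<omega>, Zv i \<omega>))
      = distr P (borel \<Otimes>\<^sub>M borel \<Otimes>\<^sub>M borel) (\<lambda>\<omega>. (Yv 0 \<omega>, Xv 0 \<omega>, Zv 0 \<omega>))"
    \<comment> \<open>null hypothesis H0: X \<perp> Y | Z\<close>
    and H0: "\<And>i. i < n \<Longrightarrow> cond_indep P (Xv i) borel (Yv i) borel (Zv i) borel"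
    and meas_g: "g \<in> borel_measurable borel"
    and meas_h: "h \<in> borel_measurable borel"
    and meas_T: "(\<lambda>(a, b, c, d). T a b c d) \<in> borel_measurable
        (vecM n borel \<Otimes>\<^sub>M vecM n borel \<Otimes>\<^sub>M vecM n borel \<Otimes>\<^sub>M vecM n borel)"
    and Mc: "Mc \<ge> 1"
    and Q_kernel: "Q \<in> vecM n borel \<rightarrow>\<^sub>M prob_algebra (vecM n borel)"
    and meas_xt: "\<And>m. m \<in> {1..Mc} \<Longrightarrow> xt m \<in> P \<rightarrow>\<^sub>M vecM n borel"
    \<comment> \<open>conditionally on D, x^(1),...,x^(M) are i.i.d. with law Q(.|Z)\<close>
    and sampling: "\<And>A. (\<And>m. m \<in> {1..Mc} \<Longrightarrow> A m \<in> sets (vecM n borel)) \<Longrightarrow>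
        AE \<omega> in P. cond_prob P D (vecM n borel \<Otimes>\<^sub>M vecM n borel \<Otimes>\<^sub>M vecM n borel)
                       (\<lambda>\<omega>'. \<forall>m\<in>{1..Mc}. xt m \<omega>' \<in> A m) \<omega>
                   = (\<Prod>m\<in>{1..Mc}. measure (Q (Zm \<omega>)) (A m))"
    and cases:
      "(\<forall>A\<in>sets (vecM n borel). AE \<omega> in P.
           measure (Q (Zm \<omega>)) A = cond_prob P Zm (vecM n borel) (\<lambda>\<omega>'. x \<omega>' \<in> A) \<omega>)
     \<or> ((\<exists>Q'. \<forall>z\<in>space (vecM n borel). Q z = Q' (vmap n g z) (vmap n h z))
        \<and> (\<forall>A\<in>sets (vecM n borel). AE \<omega> in P.
             measure (Q (Zm \<omega>)) A
           = cond_prob P (\<lambda>\<omega>'. (gZ \<omega>', hZ \<omega>')) (vecM n borel \<Otimes>\<^sub>M vecM n borel)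
               (\<lambda>\<omega>'. x \<omega>' \<in> A) \<omega>)
        \<and> cond_indep P Zm (vecM n borel) y (vecM n borel) gZ (vecM n borel))"
    and alpha: "0 \<le> \<alpha>" "\<alpha> \<le> 1"
  shows "measure P {\<omega> \<in> space P.
           p_maxway Mc T (y \<omega>) (x \<omega>) (\<lambda>m. xt m \<omega>) (gZ \<omega>) (hZ \<omega>) \<le> \<alpha>} \<le> \<alpha>"
proof -
  interpret null_sample_gh P n Yv Xv Zv borel g h
    by (rule null_sample_gh.intro[OF null_sample.intro[OF P null_sample_axioms.intro]
          null_sample_gh_axioms.intro]) (fact meas_Y meas_X meas_Z indep H0 meas_g meas_h)+
  have vectors: "y = yvec" "x = xvec" "Zm = zvec" "gZ = gvec" "hZ = hvec"
    "D = (\<lambda>\<omega>. (yvec \<omega>, xvec \<omega>, zvec \<omega>))"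
    by (simp_all add: assms(1-6) yvec_def xvec_def zvec_def gvec_def[abs_def] hvec_def[abs_def])
  have Q_law: "(\<forall>A\<in>sets VX. AE \<omega> in P. measure (Q (zvec \<omega>)) A = cp_z A \<omega>)
      \<or> ((\<forall>A\<in>sets VX. AE \<omega> in P. measure (Q (zvec \<omega>)) A = cp_gh A \<omega>)
        \<and> cond_indep P zvec VZ yvec VX gvec VG)"
    using cases unfolding vectors vecM_def cp_z_def cp_gh_def ghvec_def[abs_def] by blast
  from maxway_p_value_valid[OF meas_T[unfolded vecM_def] Q_kernel[unfolded vecM_def]
      meas_xt[unfolded vecM_def] sampling[unfolded vecM_def vectors] Q_law alpha(1)]
  show ?thesis unfolding vectors .
qed

end
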